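(* Let $s\in\mathbb{R}$, $u_0\in H^s(\mathbb{R}^d;\mathbb{R}^d)$ and $v_0\in H^{s-\alpha}(\mathbb{R}^d;\mathbb{R}^d)$. For $\delta>0$ let $u_\delta$ be the function with $\widehat{u_\delta(t,\cdot)}=\cos(\omega_\delta(\cdot)t)\hat u_0+\frac{\sin(\omega_\delta(\cdot)t)}{\omega_\delta(\cdot)}\hat v_0$ (the unique distributional solution in $C([0,\infty);H^s)\cap C^1((0,\infty);H^{s-\alpha})$ of the linear peridynamics model $\partial_{tt}u-K_\delta[u]=0$ with data $(u_0,v_0)$), and let $u$ be the function with $\widehat{u(t,\cdot)}=\cos(\gamma|\cdot|t)\hat u_0+\frac{\sin(\gamma|\cdot|t)}{\gamma|\cdot|}\hat v_0$ (the unique distributional solution in $C([0,\infty);H^s)\cap C^1((0,\infty);H^{s-1})$ of the wave equation $\partial_{tt}u-\gamma^2\Delta u=0$ with data $(u_0,v_0)$). Then for every $T\in[0,+\infty)$, $$\lim_{\delta\to0}\sup_{t\in[0,T]}\Big(\|u_\delta(t,\cdot)-u(t,\cdot)\|_{H^s(\mathbb{R}^d;\mathbb{R}^d)}+\|\partial_tu_\delta(t,\cdot)-\partial_tu(t,\cdot)\|_{H^{s-1}(\mathbb{R}^d;\mathbb{R}^d)}\Big)=0.$$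
   Context: Fix $d\ge1$, $\kappa\in(0,\infty)$, $\alpha\in(0,1)$, and $\chi\in L^\infty(\mathbb{R})$ with $\operatorname{supp}\chi\subset[-1,1]$, $0\le\chi\le1$, $\chi\equiv1$ on $[-\tfrac12,\tfrac12]$. For $\delta>0$ let $\chi_\delta(y)=\chi(|y|/\delta)$. $K_\delta[u](x)=-\frac{\kappa}{\delta^{2(1-\alpha)}}\,\mathrm{p.v.}\!\int\chi_\delta(y)\frac{u(x)-u(x-y)}{|y|^{d+2\alpha}}dy$. Fourier transform $\hat u(\xi)=(2\pi)^{-d/2}\int u(x)e^{-ix\cdot\xi}dx$, taken in $x$ for time-dependent functions. $\omega_\delta(\xi)=\big(\frac{\kappa}{\delta^{2(1-\alpha)}}\int_{\mathbb{R}^d}\chi_\delta(y)\frac{1-\cos(y\cdot\xi)}{|y|^{d+2\alpha}}dy\big)^{1/2}$, and $\sin(\omega_\delta t)/\omega_\delta$, $\sin(\gamma|\xi|t)/(\gamma|\xi|)$ equal $t$ at $\xi=0$. The constant $\gamma=\big(\frac{\kappa}{2}\mathcal L^d(B_1)\int_0^1\chi(\rho)\rho^{1-2\alpha}d\rho\big)^{1/2}$, where $\mathcal L^d(B_1)$ is the volume of the unit ball in $\mathbb{R}^d$. $H^s(\mathbb{R}^d;\mathbb{R}^d)=\{u\in\mathscr S':(1+|\xi|^2)^{s/2}\hat u\in L^2\}$ with norm equivalent to $\|(1+|\xi|^2)^{s/2}\hat u\|_{L^2}$. *)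

theory Defs
  imports "HOL-Analysis.Analysis"
begin

text \<open>Everything is expressed on the Fourier side. A vector field
  u : R^d -> R^d is represented by its Fourier transform
  hat u : R^d -> C^d (dimension d = CARD('d)).\<close>

definition Hs_normsq :: "real \<Rightarrow> (real^'d \<Rightarrow> complex^'d) \<Rightarrow> ennreal" where
  "Hs_normsq s f = (\<integral>\<^sup>+ \<xi>. ennreal ((1 + (norm \<xi>)\<^sup>2) powr s * (norm (f \<xi>))\<^sup>2) \<partial>lborel)"

definition in_Hs :: "real \<Rightarrow> (real^'d \<Rightarrow> complex^'d) \<Rightarrow> bool" where
  "in_Hs s f \<longleftrightarrow> f \<in> borel_measurable lborel \<and> Hs_normsq s f < \<infinity>"

definition Hs_norm :: "real \<Rightarrow> (real^'d \<Rightarrow> complex^'d) \<Rightarrow> real" where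
  "Hs_norm s f = sqrt (enn2real (Hs_normsq s f))"

text \<open>hat f is the Fourier transform of a real-valued (R^d-valued) function:
  hat f(-xi) = conj(hat f(xi)) componentwise, a.e.\<close>
definition real_valued_hat :: "(real^'d \<Rightarrow> complex^'d) \<Rightarrow> bool" where
  "real_valued_hat f \<longleftrightarrow> (AE \<xi> in lborel. f (- \<xi>) = (\<chi> i. cnj (f \<xi> $ i)))"

definition omega :: "real \<Rightarrow> real \<Rightarrow> (real \<Rightarrow> real) \<Rightarrow> real \<Rightarrow> real^'d \<Rightarrow> real" where
  "omega \<kappa> \<alpha> chi \<delta> \<xi> = sqrt (\<kappa> / \<delta> powr (2 * (1 - \<alpha>)) *
     (\<integral> y. chi (norm y / \<delta>) * (1 - cos (y \<bullet> \<xi>)) / norm y powr (real CARD('d) + 2 * \<alpha>) \<partial>lborel))"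

definition gamma_const :: "'d::finite itself \<Rightarrow> real \<Rightarrow> real \<Rightarrow> (real \<Rightarrow> real) \<Rightarrow> real" where
  "gamma_const _ \<kappa> \<alpha> chi = sqrt (\<kappa> / 2 * measure lborel (ball (0::real^'d) 1) *
     (LINT \<rho>:{0..1}|lborel. chi \<rho> * \<rho> powr (1 - 2 * \<alpha>)))"

definition sin_div :: "real \<Rightarrow> real \<Rightarrow> real" where
  "sin_div w t = (if w = 0 then t else sin (w * t) / w)"

definition sol_hat :: "(real^'d \<Rightarrow> real) \<Rightarrow> (real^'d \<Rightarrow> complex^'d) \<Rightarrow> (real^'d \<Rightarrow> complex^'d)
    \<Rightarrow> real \<Rightarrow> real^'d \<Rightarrow> complex^'d" where
  "sol_hat w u0 v0 t \<xi> = cos (w \<xi> * t) *\<^sub>R u0 \<xi> + sin_div (w \<xi>) t *\<^sub>R v0 \<xi>"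

definition sol_dt_hat :: "(real^'d \<Rightarrow> real) \<Rightarrow> (real^'d \<Rightarrow> complex^'d) \<Rightarrow> (real^'d \<Rightarrow> complex^'d)
    \<Rightarrow> real \<Rightarrow> real^'d \<Rightarrow> complex^'d" where
  "sol_dt_hat w u0 v0 t \<xi> = (- (w \<xi> * sin (w \<xi> * t))) *\<^sub>R u0 \<xi> + cos (w \<xi> * t) *\<^sub>R v0 \<xi>"

end

theory Submission
  imports Defs
begin

text \<open>
  On the Fourier side both solutions are explicit, so everything reduces to properties of the
  symbols. Polar coordinates and the invariance of Lebesgue measure under signed permutations of
  the coordinates give
  \<open>\<integral> \<chi>(|z|) (z\<cdot>\<xi>)\<^sup>2 |z|\<^bsup>-d-2\<alpha>\<^esup> dz = |\<xi>|\<^sup>2 |B\<^sub>1| \<integral>\<^sub>0\<^sup>1 \<chi>(\<rho>) \<rho>\<^bsup>1-2\<alpha>\<^esup> d\<rho>\<close>,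
  and the substitution \<open>y = \<delta>z\<close> turns \<open>\<omega>\<^sub>\<delta>(\<xi>)\<^sup>2\<close> into
  \<open>\<kappa> \<delta>\<^bsup>-2\<^esup> \<integral> \<chi>(|z|) (1 - cos(\<delta> z\<cdot>\<xi>)) |z|\<^bsup>-d-2\<alpha>\<^esup> dz\<close>.
  Since \<open>1 - cos x \<le> x\<^sup>2/2\<close> and \<open>(1 - cos(\<delta>x))/\<delta>\<^sup>2 \<rightarrow> x\<^sup>2/2\<close>, this yields
  \<open>0 \<le> \<omega>\<^sub>\<delta>(\<xi>) \<le> \<gamma>|\<xi>|\<close> and \<open>\<omega>\<^sub>\<delta>(\<xi>) \<rightarrow> \<gamma>|\<xi>|\<close>; restricting the integral to
  \<open>|z| \<le> 1/(2|\<xi>|)\<close>, where \<open>1 - cos x \<ge> x\<^sup>2/4\<close>, gives \<open>\<omega>\<^sub>\<delta>(\<xi>) \<ge> c|\<xi>|\<^sup>\<alpha>\<close> for \<open>|\<xi>| \<ge> 1\<close>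
  and \<open>\<delta> \<le> 1\<close>.

  These properties alone imply the theorem. The differences of the multipliers \<open>cos(\<omega>t)\<close>,
  \<open>sin(\<omega>t)/\<omega>\<close> and \<open>\<omega> sin(\<omega>t)\<close> at \<open>\<omega> = \<omega>\<^sub>\<delta>(\<xi>)\<close> and \<open>\<omega> = \<gamma>|\<xi>|\<close> are bounded,
  uniformly in \<open>t \<in> [0,T]\<close>, by quantities that tend to 0 for every \<open>\<xi>\<close> and that, by the lower
  bound on \<open>\<omega>\<^sub>\<delta>\<close>, are dominated by the \<open>H\<^sup>s\<close> weight of \<open>u\<^sub>0\<close> and the \<open>H\<^bsup>s-\<alpha>\<^esup>\<close> weight
  of \<open>v\<^sub>0\<close>; dominated convergence concludes.
\<close>

lemma one_minus_cos_le: "1 - cos x \<le> x\<^sup>2 / (2::real)"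
proof -
  have "1 - cos x = 2 * (sin (x / 2))\<^sup>2"
    using cos_double_sin[of "x / 2"] by simp
  also have "\<dots> \<le> 2 * (x / 2)\<^sup>2"
    using abs_sin_x_le_abs_x[of "x / 2"] abs_le_square_iff[of "sin (x / 2)" "x / 2"] by simp
  finally show ?thesis by (simp add: power_divide)
qed

lemma sin_ge_cubic: "0 \<le> x \<Longrightarrow> x - x ^ 3 / 6 \<le> sin (x::real)"
  using Maclaurin_sin_bound[of x 3]
  by (simp add: numeral_3_eq_3 sin_coeff_def power3_eq_cube) argo

lemma one_minus_cos_ge: "x\<^sup>2 / 2 - x ^ 4 / 24 \<le> 1 - cos (x::real)"
proof -
  have *: "x\<^sup>2 / 2 - x ^ 4 / 24 \<le> 1 - cos x" if "0 \<le> x" for x :: real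
  proof -
    let ?f = "\<lambda>x. 1 - x\<^sup>2 / 2 + x ^ 4 / 24 - cos x"
    have "?f 0 \<le> ?f x"
    proof (rule DERIV_nonneg_imp_nondecreasing[OF that])
      fix t :: real assume "0 \<le> t" "t \<le> x"
      then show "\<exists>y. (?f has_real_derivative y) (at t) \<and> 0 \<le> y"
        using sin_ge_cubic[of t]
        by (intro exI conjI) (rule derivative_eq_intros refl | simp add: power2_eq_square power3_eq_cube)+
    qed
    then show ?thesis by simp
  qed
  show ?thesis
    using *[of x] *[of "- x"] by (cases "0 \<le> x") auto
qed

lemma one_minus_cos_ge_quarter: "\<bar>x\<bar> \<le> 1 \<Longrightarrow> x\<^sup>2 / 4 \<le> 1 - cos (x::real)"
proof -
  assume "\<bar>x\<bar> \<le> 1"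
  then have "x\<^sup>2 \<le> 1" by (simp add: abs_square_le_1)
  then have "x ^ 4 \<le> x\<^sup>2"
    using mult_left_mono[of "x\<^sup>2" 1 "x\<^sup>2"] by (simp add: power4_eq_xxxx power2_eq_square mult.assoc)
  with one_minus_cos_ge[of x] zero_le_power2[of x] show ?thesis by linarith
qed

lemma tendsto_one_minus_cos_div_square:
  "((\<lambda>h. (1 - cos (h * x)) / h\<^sup>2) \<longlongrightarrow> x\<^sup>2 / 2) (at (0::real))"
proof (rule tendsto_sandwich[where f = "\<lambda>h. x\<^sup>2 / 2 - h\<^sup>2 * x ^ 4 / 24" and h = "\<lambda>_. x\<^sup>2 / 2"])
  have "h\<^sup>2 * (x\<^sup>2 / 2 - h\<^sup>2 * x ^ 4 / 24) \<le> 1 - cos (h * x)" for h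
    using one_minus_cos_ge[of "h * x"]
    by (simp add: power_mult_distrib power4_eq_xxxx power2_eq_square algebra_simps)
  then show "\<forall>\<^sub>F h in at 0. x\<^sup>2 / 2 - h\<^sup>2 * x ^ 4 / 24 \<le> (1 - cos (h * x)) / h\<^sup>2"
    by (auto simp: eventually_at_filter field_simps)
  show "\<forall>\<^sub>F h in at 0. (1 - cos (h * x)) / h\<^sup>2 \<le> x\<^sup>2 / 2"
    using one_minus_cos_le[of "h * x" for h]
    by (auto simp: eventually_at_filter field_simps power_mult_distrib)
  show "((\<lambda>h. x\<^sup>2 / 2 - h\<^sup>2 * x ^ 4 / 24) \<longlongrightarrow> x\<^sup>2 / 2) (at 0)"
    by (auto intro!: tendsto_eq_intros)
qed simp

lemma one_plus_square_powr_le: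
  fixes x \<alpha> :: real
  assumes "1 \<le> x" "0 \<le> \<alpha>" "\<alpha> \<le> 1"
  shows "(1 + x\<^sup>2) powr \<alpha> \<le> 2 * (x powr \<alpha>)\<^sup>2"
proof -
  have "(1 + x\<^sup>2) powr \<alpha> \<le> (2 * x\<^sup>2) powr \<alpha>"
    using assms by (intro powr_mono2) (auto simp: one_le_power)
  also have "\<dots> = 2 powr \<alpha> * (x powr \<alpha>)\<^sup>2"
  proof -
    have "(x\<^sup>2) powr \<alpha> = x powr (real 2 * \<alpha>)"
      using assms powr_powr[of x "real 2" \<alpha>] powr_realpow[of x 2] by simp
    also have "\<dots> = (x powr \<alpha>)\<^sup>2"
      using powr_power[of x \<alpha> 2] assms by simp
    finally show ?thesis
      by (simp add: powr_mult)
  qed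
  also have "\<dots> \<le> 2 * (x powr \<alpha>)\<^sup>2"
    using assms powr_mono[of \<alpha> 1 2] by (intro mult_right_mono) auto
  finally show ?thesis .
qed

lemma abs_cos_diff_le: "\<bar>cos x - cos y\<bar> \<le> \<bar>x - (y::real)\<bar>"
proof -
  have "\<bar>cos x - cos y\<bar> = 2 * \<bar>sin ((x + y) / 2)\<bar> * \<bar>sin ((y - x) / 2)\<bar>"
    by (simp add: cos_diff_cos abs_mult)
  also have "\<dots> \<le> 2 * 1 * \<bar>(y - x) / 2\<bar>"
    by (intro mult_mono abs_sin_x_le_abs_x) auto
  finally show ?thesis by simp
qed

lemma abs_sin_diff_le: "\<bar>sin x - sin y\<bar> \<le> \<bar>x - (y::real)\<bar>"
proof -
  have "\<bar>sin x - sin y\<bar> = 2 * \<bar>sin ((x - y) / 2)\<bar> * \<bar>cos ((x + y) / 2)\<bar>"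
    by (simp add: sin_diff_sin abs_mult)
  also have "\<dots> \<le> 2 * \<bar>(x - y) / 2\<bar> * 1"
    by (intro mult_mono abs_sin_x_le_abs_x) auto
  finally show ?thesis by simp
qed

lemma abs_cos_mult_diff_le: "0 \<le> t \<Longrightarrow> \<bar>cos (a * t) - cos (b * t)\<bar> \<le> t * \<bar>a - (b::real)\<bar>"
  using abs_cos_diff_le[of "a * t" "b * t"] by (simp add: abs_mult left_diff_distrib[symmetric] mult.commute)

lemma abs_mult_sin_diff_le:
  fixes a b t :: real
  assumes "0 \<le> b" "0 \<le> t"
  shows "\<bar>a * sin (a * t) - b * sin (b * t)\<bar> \<le> \<bar>a - b\<bar> * (1 + b * t)"
proof -
  have "\<bar>(a - b) * sin (a * t)\<bar> \<le> \<bar>a - b\<bar>"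
    by (simp add: abs_mult mult_left_le)
  moreover have "\<bar>sin (a * t) - sin (b * t)\<bar> \<le> t * \<bar>a - b\<bar>"
    using abs_sin_diff_le[of "a * t" "b * t"] assms
    by (simp add: abs_mult left_diff_distrib[symmetric] mult.commute)
  then have "\<bar>b * (sin (a * t) - sin (b * t))\<bar> \<le> b * (t * \<bar>a - b\<bar>)"
    using assms by (simp add: abs_mult mult_left_mono)
  ultimately show ?thesis
    using abs_triangle_ineq[of "(a - b) * sin (a * t)" "b * (sin (a * t) - sin (b * t))"]
    by (simp add: algebra_simps)
qed

(* This representation gives the bounds on sin_div below uniformly in w, including w = 0. *)
lemma sin_div_has_integral:
  assumes "0 \<le> t"
  shows "((\<lambda>s. cos (w * s)) has_integral sin_div w t) {0..t}"
proof -
  have "(sin_div w has_real_derivative cos (w * s)) (at s)" for s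
    by (cases "w = 0") (auto simp: sin_div_def[abs_def] intro!: derivative_eq_intros)
  then have "((\<lambda>s. cos (w * s)) has_integral sin_div w t - sin_div w 0) {0..t}"
    using assms by (intro fundamental_theorem_of_calculus)
      (auto simp: has_real_derivative_iff_has_vector_derivative[symmetric] intro: has_field_derivative_at_within)
  then show ?thesis by (cases "w = 0") (simp_all add: sin_div_def)
qed

lemma abs_sin_div_le: "0 \<le> t \<Longrightarrow> \<bar>sin_div w t\<bar> \<le> t"
  using has_integral_bound[of 1 "\<lambda>s. cos (w * s)" "sin_div w t" 0 t] sin_div_has_integral[of t w]
  by simp

lemma abs_sin_div_le_inverse: "0 < w \<Longrightarrow> \<bar>sin_div w t\<bar> \<le> 1 / w"
  by (simp add: sin_div_def abs_divide divide_right_mono)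

lemma abs_sin_div_diff_le:
  assumes "0 \<le> t"
  shows "\<bar>sin_div a t - sin_div b t\<bar> \<le> t\<^sup>2 * \<bar>a - b\<bar>"
proof -
  have "((\<lambda>s. cos (a * s) - cos (b * s)) has_integral sin_div a t - sin_div b t) {0..t}"
    using assms by (intro has_integral_diff sin_div_has_integral)
  moreover have "\<bar>cos (a * s) - cos (b * s)\<bar> \<le> t * \<bar>a - b\<bar>" if "s \<in> {0..t}" for s
    using that by (intro order_trans[OF abs_cos_mult_diff_le] mult_right_mono) auto
  ultimately show ?thesis
    using has_integral_bound[of "t * \<bar>a - b\<bar>" "\<lambda>s. cos (a * s) - cos (b * s)" _ 0 t] assms
    by (simp add: power2_eq_square mult_ac)
qed

lemma norm_scaleR_add_square_le:
  fixes x y :: "'a::real_normed_vector"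
  assumes "\<bar>c\<bar> \<le> C" "\<bar>d\<bar> \<le> D"
  shows "(norm (c *\<^sub>R x + d *\<^sub>R y))\<^sup>2 \<le> 2 * C\<^sup>2 * (norm x)\<^sup>2 + 2 * D\<^sup>2 * (norm y)\<^sup>2"
proof -
  have "norm (c *\<^sub>R x + d *\<^sub>R y) \<le> C * norm x + D * norm y"
    using norm_triangle_ineq[of "c *\<^sub>R x" "d *\<^sub>R y"] assms
    by (smt (verit) mult_right_mono norm_ge_zero norm_scaleR)
  then have "(norm (c *\<^sub>R x + d *\<^sub>R y))\<^sup>2 \<le> (C * norm x + D * norm y)\<^sup>2"
    by (intro power_mono) auto
  also have "\<dots> \<le> 2 * C\<^sup>2 * (norm x)\<^sup>2 + 2 * D\<^sup>2 * (norm y)\<^sup>2"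
    using sum_squares_ge_zero[of "C * norm x - D * norm y" 0]
    by (simp add: power2_eq_square algebra_simps)
  finally show ?thesis .
qed

section \<open>Limits of integrals and Sobolev norms\<close>

lemma integral_dominated_convergence_at_right:
  fixes s :: "real \<Rightarrow> 'a \<Rightarrow> 'b::{banach, second_countable_topology}"
  assumes "f \<in> borel_measurable M" "\<And>t. s t \<in> borel_measurable M" "integrable M w"
    and lim: "AE x in M. ((\<lambda>t. s t x) \<longlongrightarrow> f x) (at_right a)"
    and bound: "\<forall>\<^sub>F t in at_right a. AE x in M. norm (s t x) \<le> w x"
  shows "((\<lambda>t. integral\<^sup>L M (s t)) \<longlongrightarrow> integral\<^sup>L M f) (at_right a)"
proof -
  obtain b where "a < b" and b: "\<And>t. a < t \<Longrightarrow> t < b \<Longrightarrow> AE x in M. norm (s t x) \<le> w x"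
    using bound unfolding eventually_at_right_field by blast
  show ?thesis
  proof (rule tendsto_at_right_sequentially[OF \<open>a < b\<close>])
    fix S :: "nat \<Rightarrow> real"
    assume S: "\<And>n. a < S n" "\<And>n. S n < b" "S \<longlonglongrightarrow> a"
    then have S_at_right: "filterlim S (at_right a) sequentially"
      by (intro tendsto_imp_filterlim_at_right) auto
    have "AE x in M. (\<lambda>n. s (S n) x) \<longlonglongrightarrow> f x"
      using lim by eventually_elim (rule filterlim_compose[OF _ S_at_right])
    then show "(\<lambda>n. integral\<^sup>L M (s (S n))) \<longlonglongrightarrow> integral\<^sup>L M f"
      using S b by (intro integral_dominated_convergence[where w = w]) (auto simp: assms)
  qed
qed

lemma tendsto_SUP_zero:
  fixes F :: "'a \<Rightarrow> 'b \<Rightarrow> real"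
  assumes "A \<noteq> {}"
    and bound: "\<forall>\<^sub>F x in L. \<forall>t\<in>A. 0 \<le> F x t \<and> F x t \<le> B x"
    and "(B \<longlongrightarrow> 0) L"
  shows "((\<lambda>x. SUP t\<in>A. F x t) \<longlongrightarrow> 0) L"
proof (rule tendsto_sandwich[where f = "\<lambda>_. 0" and h = B])
  obtain t0 where "t0 \<in> A" using assms(1) by blast
  show "\<forall>\<^sub>F x in L. 0 \<le> (SUP t\<in>A. F x t)"
    using bound
  proof eventually_elim
    case (elim x)
    then have "F x t0 \<le> (SUP t\<in>A. F x t)"
      using \<open>t0 \<in> A\<close> by (intro cSUP_upper bdd_aboveI2[where M = "B x"]) auto
    with elim \<open>t0 \<in> A\<close> show ?case by force
  qed
  show "\<forall>\<^sub>F x in L. (SUP t\<in>A. F x t) \<le> B x"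
    using bound by eventually_elim (use assms(1) in \<open>auto intro: cSUP_least\<close>)
qed (use assms in auto)

lemma Hs_norm_le_sqrt_integral:
  fixes f :: "real^'d \<Rightarrow> complex^'d" and H :: "real^'d \<Rightarrow> real"
  assumes "integrable lborel H" "\<And>\<xi>. 0 \<le> H \<xi>"
    and le: "\<And>\<xi>. (1 + (norm \<xi>)\<^sup>2) powr r * (norm (f \<xi>))\<^sup>2 \<le> H \<xi>"
  shows "Hs_norm r f \<le> sqrt (\<integral>\<xi>. H \<xi> \<partial>lborel)"
proof -
  have "Hs_normsq r f \<le> (\<integral>\<^sup>+\<xi>. ennreal (H \<xi>) \<partial>lborel)"
    unfolding Hs_normsq_def by (intro nn_integral_mono ennreal_leI le)
  also have "\<dots> = ennreal (\<integral>\<xi>. H \<xi> \<partial>lborel)"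
    using assms by (intro nn_integral_eq_integral) auto
  finally have "enn2real (Hs_normsq r f) \<le> (\<integral>\<xi>. H \<xi> \<partial>lborel)"
    by (rule enn2real_leI[rotated]) (simp add: assms)
  then show ?thesis unfolding Hs_norm_def by simp
qed

lemma in_Hs_integrable:
  "in_Hs s f \<Longrightarrow> integrable lborel (\<lambda>\<xi>. (1 + (norm \<xi>)\<^sup>2) powr s * (norm (f \<xi>))\<^sup>2)"
  by (rule integrableI_nonneg) (auto simp: in_Hs_def Hs_normsq_def)

lemma
  fixes A :: "real \<Rightarrow> 'a \<Rightarrow> real" and h p :: "'a \<Rightarrow> real"
  assumes [measurable]: "\<And>\<delta>. A \<delta> \<in> borel_measurable M" "h \<in> borel_measurable M"
    and int: "integrable M (\<lambda>x. p x * h x)" and h_nonneg: "\<And>x. 0 \<le> h x"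
    and A_bounds: "\<And>\<delta> x. 0 < \<delta> \<Longrightarrow> \<delta> \<le> 1 \<Longrightarrow> 0 \<le> A \<delta> x \<and> A \<delta> x \<le> p x"
    and A_tendsto: "\<And>x. ((\<lambda>\<delta>. A \<delta> x) \<longlongrightarrow> 0) (at_right 0)"
  shows integrable_dominated_weight: "0 < \<delta> \<Longrightarrow> \<delta> \<le> 1 \<Longrightarrow> integrable M (\<lambda>x. A \<delta> x * h x)"
    and integral_dominated_weight_tendsto_0: "((\<lambda>\<delta>. \<integral>x. A \<delta> x * h x \<partial>M) \<longlongrightarrow> 0) (at_right 0)"
proof -
  have bound: "norm (A \<delta> x * h x) \<le> p x * h x" if "0 < \<delta>" "\<delta> \<le> 1" for \<delta> x
    using A_bounds[OF that, of x] h_nonneg[of x] by (simp add: abs_mult mult_right_mono)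
  show "integrable M (\<lambda>x. A \<delta> x * h x)" if "0 < \<delta>" "\<delta> \<le> 1" for \<delta>
  proof (rule Bochner_Integration.integrable_bound[OF int])
    show "AE x in M. norm (A \<delta> x * h x) \<le> norm (p x * h x)"
      using bound[OF that] by (intro AE_I2) (metis abs_ge_self order_trans real_norm_def)
  qed measurable
  have "((\<lambda>\<delta>. \<integral>x. A \<delta> x * h x \<partial>M) \<longlongrightarrow> (\<integral>x. 0 * h x \<partial>M)) (at_right 0)"
  proof (rule integral_dominated_convergence_at_right[OF _ _ int])
    show "AE x in M. ((\<lambda>\<delta>. A \<delta> x * h x) \<longlongrightarrow> 0 * h x) (at_right 0)"
      by (intro AE_I2 tendsto_mult A_tendsto tendsto_const)
    show "\<forall>\<^sub>F \<delta> in at_right 0. AE x in M. norm (A \<delta> x * h x) \<le> p x * h x"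
      using bound by (auto simp: eventually_at_right_field intro!: exI[of _ 1])
  qed simp_all
  then show "((\<lambda>\<delta>. \<integral>x. A \<delta> x * h x \<partial>M) \<longlongrightarrow> 0) (at_right 0)"
    by simp
qed

section \<open>Radial integrals\<close>

(* Density of the distribution of |z| under Lebesgue measure on R^n: the area of the sphere of radius rho. *)
abbreviation radial_density :: "nat \<Rightarrow> real \<Rightarrow> real" where
  "radial_density n \<rho> \<equiv> indicator {0<..} \<rho> * (real n * unit_ball_vol (real n) * \<rho> ^ (n - 1))"

lemma emeasure_norm_Ioc:
  fixes a b :: real
  assumes "a \<le> b"
  shows "emeasure lborel {z::real^'d. a < norm z \<and> norm z \<le> b} =
    ennreal (unit_ball_vol (real CARD('d)) * (max b 0 ^ CARD('d) - max a 0 ^ CARD('d)))"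
proof (cases "a < 0")
  case True
  then have eq: "{z::real^'d. a < norm z \<and> norm z \<le> b} = cball 0 b"
    by (auto simp: dist_norm intro: less_le_trans[OF _ norm_ge_zero])
  show ?thesis
    using True by (cases "b < 0") (auto simp: eq emeasure_cball max_def)
next
  case False
  then have eq: "{z::real^'d. a < norm z \<and> norm z \<le> b} = cball 0 b - cball 0 a"
    by (auto simp: dist_norm)
  have "emeasure lborel (cball (0::real^'d) b - cball 0 a) =
      emeasure lborel (cball (0::real^'d) b) - emeasure lborel (cball (0::real^'d) a)"
    using False assms by (intro emeasure_Diff) (auto simp: emeasure_cball)
  then show ?thesis
    using False assms
    by (simp add: eq emeasure_cball ennreal_minus power_mono right_diff_distrib)
qed

lemma distr_norm_lborel:
  "distr (lborel::(real^'d) measure) borel norm = density lborel (\<lambda>\<rho>. radial_density CARD('d) \<rho>)"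
  (is "?M = ?N")
proof -
  define n where "n = CARD('d)"
  define V where "V = unit_ball_vol (real n)"
  define F where "F r = V * max r 0 ^ n" for r :: real
  have "1 \<le> n" by (simp add: n_def Suc_leI)
  have V: "0 < V" by (simp add: V_def)
  have M_Ioc: "emeasure ?M {a<..b} = ennreal (F b - F a)" if "a \<le> b" for a b
  proof -
    have "emeasure ?M {a<..b} = emeasure lborel {z::real^'d. a < norm z \<and> norm z \<le> b}"
      by (subst emeasure_distr) (auto intro!: arg_cong2[where f = emeasure])
    then show ?thesis
      by (simp add: emeasure_norm_Ioc[OF that] F_def V_def n_def right_diff_distrib)
  qed
  have N_Ioc: "emeasure ?N {a<..b} = ennreal (F b - F a)" if "a \<le> b" for a b
  proof -
    have "emeasure ?N {a<..b} =
        (\<integral>\<^sup>+\<rho>. ennreal (radial_density CARD('d) \<rho>) * indicator {a<..b} \<rho> \<partial>lborel)"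
      by (subst emeasure_density) auto
    also have "\<dots> =
        (\<integral>\<^sup>+\<rho>. ennreal (real n * V * \<rho> ^ (n - 1)) * indicator {max a 0..max b 0} \<rho> \<partial>lborel)"
    proof (intro nn_integral_cong_AE)
      have "AE \<rho> in lborel. \<rho> \<notin> {max a 0, 0}"
        by (intro AE_not_in countable_imp_null_set_lborel) auto
      then show "AE \<rho> in lborel. ennreal (radial_density CARD('d) \<rho>) * indicator {a<..b} \<rho> =
          ennreal (real n * V * \<rho> ^ (n - 1)) * indicator {max a 0..max b 0} \<rho>"
        by eventually_elim (auto simp: indicator_def n_def V_def)
    qed
    also have "\<dots> = ennreal (V * max b 0 ^ n - V * max a 0 ^ n)"
      using that V \<open>1 \<le> n\<close> by (intro nn_integral_FTC_Icc) (auto intro!: derivative_eq_intros)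
    finally show ?thesis by (simp add: F_def)
  qed
  show ?thesis
  proof (rule measure_eqI_generator_eq[where E = "range (\<lambda>(a, b). {a<..b::real})" and \<Omega> = UNIV
        and A = "\<lambda>i. {- real i<..real i}"])
    show "Int_stable (range (\<lambda>(a, b). {a<..b::real}))"
      by (auto simp: Int_stable_def)
    show "sets ?M = sigma_sets UNIV (range (\<lambda>(a, b). {a<..b::real}))"
      "sets ?N = sigma_sets UNIV (range (\<lambda>(a, b). {a<..b::real}))"
      by (simp_all add: borel_sigma_sets_Ioc)
    show "(\<Union>i. {- real i<..real i}) = UNIV"
      by (auto simp: minus_less_iff)
        (metis gt_ex reals_Archimedean2 abs_le_iff le_less_trans linorder_not_le order_less_imp_le)
    show "emeasure ?M X = emeasure ?N X" if X: "X \<in> range (\<lambda>(a, b). {a<..b::real})" for X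
    proof -
      obtain a b where "X = {a<..b}" using X by auto
      then show ?thesis
        using M_Ioc[of a b] N_Ioc[of a b] by (cases "a \<le> b") simp_all
    qed
  qed (auto simp: M_Ioc)
qed

lemma nn_integral_radial:
  fixes f :: "real \<Rightarrow> ennreal"
  assumes [measurable]: "f \<in> borel_measurable borel"
  shows "(\<integral>\<^sup>+z. f (norm z) \<partial>(lborel::(real^'d) measure)) =
    (\<integral>\<^sup>+\<rho>. ennreal (radial_density CARD('d) \<rho>) * f \<rho> \<partial>lborel)"
proof -
  have "(\<integral>\<^sup>+z. f (norm z) \<partial>(lborel::(real^'d) measure)) =
      (\<integral>\<^sup>+\<rho>. f \<rho> \<partial>distr (lborel::(real^'d) measure) borel norm)"
    by (subst nn_integral_distr) auto
  then show ?thesis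
    unfolding distr_norm_lborel by (subst (asm) nn_integral_density) auto
qed

lemma prod_Basis_vec: "(\<Prod>b\<in>(Basis :: (real^'d) set). f b) = (\<Prod>i\<in>UNIV. f (axis i 1))"
proof -
  have B: "(Basis :: (real^'d) set) = range (\<lambda>i. axis i 1)"
    by (auto simp: Basis_vec_def)
  show ?thesis
    unfolding B by (subst prod.reindex) (auto simp: inj_on_def axis_eq_axis)
qed

lemma lborel_signed_permutation:
  fixes p :: "'d::finite \<Rightarrow> 'd" and s :: "'d \<Rightarrow> real"
  assumes p: "bij p" and s: "\<And>i. s i = 1 \<or> s i = -1"
  shows "distr lborel borel (\<lambda>z::real^'d. \<chi> i. s i * z $ p i) = lborel"
proof (rule lborel_eqI[symmetric])
  let ?T = "\<lambda>z::real^'d. \<chi> i. s i * z $ p i"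
  fix l u :: "real^'d"
  assume le: "\<And>b. b \<in> Basis \<Longrightarrow> l \<bullet> b \<le> u \<bullet> b"
  have lu: "l $ i \<le> u $ i" for i
    using le[of "axis i 1"] by (auto simp: Basis_vec_def inner_axis)
  define lo where "lo i = (if s i = 1 then l $ i else - u $ i)" for i
  define hi where "hi i = (if s i = 1 then u $ i else - l $ i)" for i
  have s_neg: "s i \<noteq> 1 \<Longrightarrow> s i = -1" for i
    using s[of i] by simp
  define q where "q = inv p"
  have pq: "p (q j) = j" and qp: "q (p j) = j" for j
    unfolding q_def using p by (simp_all add: bij_is_surj surj_f_inv_f bij_is_inj inv_f_f)
  have pre: "?T -` box l u = box (\<chi> j. lo (q j)) (\<chi> j. hi (q j))"
  proof (rule set_eqI)
    fix z :: "real^'d"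
    have "z \<in> ?T -` box l u \<longleftrightarrow> (\<forall>i. l $ i < s i * z $ p i \<and> s i * z $ p i < u $ i)"
      by (simp add: mem_box_cart)
    also have "\<dots> \<longleftrightarrow> (\<forall>i. lo i < z $ p i \<and> z $ p i < hi i)"
      by (intro all_cong1) (auto simp: lo_def hi_def s_neg)
    also have "\<dots> \<longleftrightarrow> (\<forall>j. lo (q j) < z $ j \<and> z $ j < hi (q j))"
      by (metis pq qp)
    finally show "z \<in> ?T -` box l u \<longleftrightarrow> z \<in> box (\<chi> j. lo (q j)) (\<chi> j. hi (q j))"
      by (simp add: mem_box_cart)
  qed
  have "bij q" unfolding q_def using p by (rule bij_imp_bij_inv)
  have hl: "lo i \<le> hi i" and hl_diff: "hi i - lo i = u $ i - l $ i" for i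
    using s[of i] lu[of i] by (auto simp: lo_def hi_def)
  have "emeasure (distr lborel borel ?T) (box l u) = emeasure lborel (?T -` box l u)"
    by (subst emeasure_distr) (auto intro!: borel_measurable_continuous_onI continuous_intros)
  also have "\<dots> = (\<Prod>j\<in>UNIV. hi (q j) - lo (q j))"
  proof -
    have "\<forall>b\<in>Basis. (\<chi> j. lo (q j)) \<bullet> b \<le> (\<chi> j. hi (q j)) \<bullet> b"
      by (auto simp: Basis_vec_def inner_axis hl)
    then show ?thesis
      unfolding pre emeasure_lborel_box_eq by (simp add: prod_Basis_vec inner_axis)
  qed
  also have "\<dots> = (\<Prod>i\<in>UNIV. u $ i - l $ i)"
    using prod.reindex_bij_betw[OF \<open>bij q\<close>, of "\<lambda>i. hi i - lo i"] by (simp add: hl_diff)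
  finally show "emeasure (distr lborel borel ?T) (box l u) = (\<Prod>b\<in>Basis. (u - l) \<bullet> b)"
    by (simp add: prod_Basis_vec inner_axis)
qed simp

lemma
  fixes p :: "'d::finite \<Rightarrow> 'd" and s :: "'d \<Rightarrow> real" and f :: "real^'d \<Rightarrow> real"
  assumes p: "bij p" and s: "\<And>i. s i = 1 \<or> s i = -1"
  shows integral_signed_permutation:
      "f \<in> borel_measurable borel \<Longrightarrow> (\<integral>z. f (\<chi> i. s i * z $ p i) \<partial>lborel) = (\<integral>z. f z \<partial>lborel)"
    and norm_signed_permutation: "norm (\<chi> i. s i * z $ p i) = norm (z::real^'d)"
proof -
  assume [measurable]: "f \<in> borel_measurable borel"
  have "(\<integral>z. f z \<partial>lborel) = (\<integral>z. f z \<partial>distr lborel borel (\<lambda>z::real^'d. \<chi> i. s i * z $ p i))"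
    by (simp add: lborel_signed_permutation[OF p s])
  also have "\<dots> = (\<integral>z. f (\<chi> i. s i * z $ p i) \<partial>lborel)"
    by (rule integral_distr) (auto intro!: borel_measurable_continuous_onI continuous_intros)
  finally show "(\<integral>z. f (\<chi> i. s i * z $ p i) \<partial>lborel) = (\<integral>z. f z \<partial>lborel)" by simp
next
  have "(s i)\<^sup>2 = 1" for i
    using s[of i] by auto
  then have "(\<Sum>i\<in>UNIV. (s i * z $ p i)\<^sup>2) = (\<Sum>i\<in>UNIV. (z $ p i)\<^sup>2)"
    by (simp add: power_mult_distrib)
  also have "\<dots> = (\<Sum>i\<in>UNIV. (z $ i)\<^sup>2)"
    using sum.reindex_bij_betw[OF p, of "\<lambda>i. (z $ i)\<^sup>2"] by simp
  finally show "norm (\<chi> i. s i * z $ p i) = norm z"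
    by (simp add: norm_vec_def L2_set_def)
qed

lemma integral_radial_mult_components:
  fixes h :: "real \<Rightarrow> real"
  assumes [measurable]: "h \<in> borel_measurable borel"
  shows "i \<noteq> j \<Longrightarrow> (\<integral>z. h (norm z) * (z $ i * z $ j) \<partial>(lborel::(real^'d::finite) measure)) = 0"
    and "(\<integral>z. h (norm z) * (z $ i * z $ i) \<partial>(lborel::(real^'d) measure)) =
      (\<integral>z. h (norm z) * (z $ j * z $ j) \<partial>lborel)"
proof -
  let ?f = "\<lambda>k l z::real^'d. h (norm z) * (z $ k * z $ l)"
  assume "i \<noteq> j"
  let ?s = "\<lambda>k. if k = i then -1 else 1 :: real"
  have "(\<integral>z. ?f i j z \<partial>lborel) = (\<integral>z. ?f i j (\<chi> k. ?s k * z $ id k) \<partial>lborel)"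
    by (rule integral_signed_permutation[OF bij_id, symmetric]) auto
  also have "\<dots> = - (\<integral>z. ?f i j z \<partial>lborel)"
    using \<open>i \<noteq> j\<close> by (simp add: norm_signed_permutation[of id ?s, simplified])
  finally show "(\<integral>z. ?f i j z \<partial>lborel) = 0" by simp
next
  let ?p = "\<lambda>k::'d. if k = i then j else if k = j then i else k"
  have "bij ?p"
    by (rule o_bij[where g = ?p]) (auto simp: fun_eq_iff)
  have "(\<integral>z. h (norm z) * (z $ j * z $ j) \<partial>lborel) =
      (\<integral>z. h (norm (\<chi> k. 1 * z $ ?p k)) * ((\<chi> k. 1 * z $ ?p k) $ i * (\<chi> k. 1 * z $ ?p k) $ i)
        \<partial>(lborel::(real^'d) measure))"
    by (simp add: norm_signed_permutation[OF \<open>bij ?p\<close>, of "\<lambda>_. 1", simplified])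
  also have "\<dots> = (\<integral>z. h (norm z) * (z $ i * z $ i) \<partial>lborel)"
    by (rule integral_signed_permutation[OF \<open>bij ?p\<close>]) auto
  finally show "(\<integral>z. h (norm z) * (z $ i * z $ i) \<partial>(lborel::(real^'d) measure)) =
      (\<integral>z. h (norm z) * (z $ j * z $ j) \<partial>lborel)" by simp
qed

lemma integral_radial_inner_square:
  fixes h :: "real \<Rightarrow> real" and \<xi> :: "real^'d::finite"
  assumes h[measurable]: "h \<in> borel_measurable borel"
    and int: "integrable lborel (\<lambda>z::real^'d. h (norm z) * (norm z)\<^sup>2)"
  shows "(\<integral>z. h (norm z) * (z \<bullet> \<xi>)\<^sup>2 \<partial>lborel) =
    (norm \<xi>)\<^sup>2 / real CARD('d) * (\<integral>z. h (norm z) * (norm z)\<^sup>2 \<partial>(lborel::(real^'d) measure))"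
proof -
  define M where "M i j = (\<integral>z. h (norm z) * (z $ i * z $ j) \<partial>(lborel::(real^'d) measure))" for i j
  have int_ij: "integrable lborel (\<lambda>z::real^'d. h (norm z) * (z $ i * z $ j))" for i j
  proof (rule Bochner_Integration.integrable_bound[OF int])
    have "\<bar>z $ i * z $ j\<bar> \<le> (norm z)\<^sup>2" for z :: "real^'d"
      using component_le_norm_cart[of z i] component_le_norm_cart[of z j]
      by (simp add: abs_mult power2_eq_square mult_mono)
    then show "AE z in lborel. norm (h (norm z) * (z $ i * z $ j)) \<le> norm (h (norm z) * (norm z)\<^sup>2)"
      by (simp add: abs_mult mult_left_mono)
  qed measurable
  obtain k :: 'd where True by simp
  have M_diag: "M i i = M k k" for i
    unfolding M_def by (rule integral_radial_mult_components(2)) measurable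
  have "(\<integral>z. h (norm z) * (z \<bullet> \<xi>)\<^sup>2 \<partial>lborel) = (\<Sum>i\<in>UNIV. \<Sum>j\<in>UNIV. \<xi> $ i * \<xi> $ j * M i j)"
  proof -
    have "(\<lambda>z::real^'d. h (norm z) * (z \<bullet> \<xi>)\<^sup>2) =
        (\<lambda>z. \<Sum>i\<in>UNIV. \<Sum>j\<in>UNIV. \<xi> $ i * \<xi> $ j * (h (norm z) * (z $ i * z $ j)))"
      by (auto simp: fun_eq_iff inner_vec_def power2_eq_square sum_product sum_distrib_left algebra_simps)
    then show ?thesis
      using int_ij by (simp add: M_def integrable_sum)
  qed
  also have "\<dots> = (\<Sum>i\<in>UNIV. \<Sum>j\<in>UNIV. if i = j then \<xi> $ i * \<xi> $ i * M k k else 0)"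
  proof (intro sum.cong refl)
    fix i j :: 'd
    show "\<xi> $ i * \<xi> $ j * M i j = (if i = j then \<xi> $ i * \<xi> $ i * M k k else 0)"
      using integral_radial_mult_components(1)[OF h, of i j] M_diag[of i] by (auto simp: M_def)
  qed
  also have "\<dots> = (\<Sum>i\<in>UNIV. \<xi> $ i * \<xi> $ i) * M k k"
    by (simp add: sum_distrib_right)
  also have "(\<Sum>i\<in>UNIV. \<xi> $ i * \<xi> $ i) = (norm \<xi>)\<^sup>2"
    by (simp add: power2_norm_eq_inner inner_vec_def)
  also have "M k k = (\<integral>z. h (norm z) * (norm z)\<^sup>2 \<partial>(lborel::(real^'d) measure)) / real CARD('d)"
  proof -
    have "(\<lambda>z::real^'d. h (norm z) * (norm z)\<^sup>2) = (\<lambda>z. \<Sum>i\<in>UNIV. h (norm z) * (z $ i * z $ i))"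
      by (auto simp: fun_eq_iff power2_norm_eq_inner inner_vec_def sum_distrib_left)
    then have "(\<integral>z. h (norm z) * (norm z)\<^sup>2 \<partial>(lborel::(real^'d) measure)) = (\<Sum>i\<in>UNIV. M i i)"
      using int_ij by (simp add: M_def)
    also have "\<dots> = real CARD('d) * M k k"
      by (simp add: sum.cong[OF refl M_diag])
    finally show ?thesis by simp
  qed
  finally show ?thesis by simp
qed

lemma nn_integral_powr_Ioc:
  fixes \<beta> r :: real
  assumes "-1 < \<beta>" "0 \<le> r"
  shows "(\<integral>\<^sup>+\<rho>. ennreal (indicator {0<..r} \<rho> * \<rho> powr \<beta>) \<partial>lborel) = ennreal (r powr (\<beta> + 1) / (\<beta> + 1))"
proof -
  have "((\<lambda>\<rho>. \<rho> powr \<beta>) has_integral (r powr (\<beta> + 1) / (\<beta> + 1))) {0..r}"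
    using has_integral_powr_from_0[of \<beta> r] assms by auto
  then have "((\<lambda>\<rho>. if \<rho> \<in> {0..r} then \<rho> powr \<beta> else 0) has_integral (r powr (\<beta> + 1) / (\<beta> + 1))) UNIV"
    by (simp only: has_integral_restrict_UNIV)
  moreover have "(\<lambda>\<rho>. if \<rho> \<in> {0..r} then \<rho> powr \<beta> else 0) = (\<lambda>\<rho>. indicator {0..r} \<rho> * \<rho> powr \<beta>)"
    by (auto simp: fun_eq_iff)
  ultimately have "((\<lambda>\<rho>. indicator {0..r} \<rho> * \<rho> powr \<beta>) has_integral (r powr (\<beta> + 1) / (\<beta> + 1))) UNIV"
    by simp
  then have "(\<integral>\<^sup>+\<rho>. ennreal (indicator {0..r} \<rho> * \<rho> powr \<beta>) \<partial>lborel) = ennreal (r powr (\<beta> + 1) / (\<beta> + 1))"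
    by (rule nn_integral_has_integral_lborel[rotated 2]) auto
  moreover have "(\<integral>\<^sup>+\<rho>. ennreal (indicator {0<..r} \<rho> * \<rho> powr \<beta>) \<partial>lborel) =
      (\<integral>\<^sup>+\<rho>. ennreal (indicator {0..r} \<rho> * \<rho> powr \<beta>) \<partial>lborel)"
    by (intro nn_integral_cong_AE AE_I[where N = "{0}"]) (auto simp: indicator_def)
  ultimately show ?thesis by simp
qed

lemma integral_powr_Ioc:
  fixes \<beta> r :: real
  assumes "-1 < \<beta>" "0 \<le> r"
  shows "(\<integral>\<rho>. indicator {0<..r} \<rho> * \<rho> powr \<beta> \<partial>lborel) = r powr (\<beta> + 1) / (\<beta> + 1)"
  using assms by (subst integral_eq_nn_integral) (auto simp: nn_integral_powr_Ioc)

context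
  fixes g :: "real \<Rightarrow> real" and \<alpha> :: real
  assumes g_measurable [measurable]: "g \<in> borel_measurable borel"
    and g_nonneg: "\<And>\<rho>. 0 \<le> g \<rho>" and g_le_1: "\<And>\<rho>. g \<rho> \<le> 1"
    and g_vanishes: "\<And>\<rho>. 1 < \<rho> \<Longrightarrow> g \<rho> = 0"
    and \<alpha>: "0 < \<alpha>" "\<alpha> < 1"
begin

lemma integrable_radial_profile: "integrable lborel (\<lambda>\<rho>. indicator {0<..} \<rho> * g \<rho> * \<rho> powr (1 - 2 * \<alpha>))"
proof (rule integrableI_nonneg)
  have "(\<integral>\<^sup>+\<rho>. ennreal (indicator {0<..} \<rho> * g \<rho> * \<rho> powr (1 - 2 * \<alpha>)) \<partial>lborel)
      \<le> (\<integral>\<^sup>+\<rho>. ennreal (indicator {0<..1} \<rho> * \<rho> powr (1 - 2 * \<alpha>)) \<partial>lborel)"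
    using g_nonneg g_le_1 g_vanishes
    by (intro nn_integral_mono ennreal_leI) (auto simp: indicator_def not_le)
  also have "\<dots> < \<infinity>"
    using \<alpha> by (simp add: nn_integral_powr_Ioc)
  finally show "(\<integral>\<^sup>+\<rho>. ennreal (indicator {0<..} \<rho> * g \<rho> * \<rho> powr (1 - 2 * \<alpha>)) \<partial>lborel) < \<infinity>" .
qed (use g_nonneg in \<open>auto simp: indicator_def\<close>)

lemma nn_integral_radial_kernel_norm_square:
  "(\<integral>\<^sup>+z. ennreal (g (norm z) * (norm z)\<^sup>2 / norm z powr (real CARD('d) + 2 * \<alpha>))
      \<partial>(lborel::(real^'d::finite) measure)) =
    ennreal (real CARD('d) * unit_ball_vol (real CARD('d)) *
      (\<integral>\<rho>. indicator {0<..} \<rho> * g \<rho> * \<rho> powr (1 - 2 * \<alpha>) \<partial>lborel))"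
proof -
  let ?n = "CARD('d)"
  let ?p = "real ?n + 2 * \<alpha>"
  let ?V = "unit_ball_vol (real ?n)"
  define k where "k \<rho> = indicator {0<..} \<rho> * g \<rho> * \<rho> powr (1 - 2 * \<alpha>)" for \<rho> :: real
  have k_nonneg: "0 \<le> k \<rho>" for \<rho>
    using g_nonneg by (simp add: k_def indicator_def)
  have power_eq: "\<rho> ^ (?n - 1) * \<rho>\<^sup>2 / \<rho> powr ?p = \<rho> powr (1 - 2 * \<alpha>)" if "0 < \<rho>" for \<rho> :: real
  proof -
    have "\<rho> ^ (?n - 1) * \<rho>\<^sup>2 = \<rho> ^ (?n + 1)"
      by (simp add: power_add[symmetric] Suc_leI)
    also have "\<dots> = \<rho> powr (real ?n + 1)"
      using powr_realpow[OF that, of "?n + 1"] by (simp add: add.commute)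
    finally show ?thesis
      using that by (simp add: powr_diff[symmetric])
  qed
  have "(\<integral>\<^sup>+z. ennreal (g (norm z) * (norm z)\<^sup>2 / norm z powr ?p) \<partial>(lborel::(real^'d) measure)) =
      (\<integral>\<^sup>+\<rho>. ennreal (radial_density ?n \<rho>) * ennreal (g \<rho> * \<rho>\<^sup>2 / \<rho> powr ?p) \<partial>lborel)"
    by (rule nn_integral_radial) measurable
  also have "\<dots> = (\<integral>\<^sup>+\<rho>. ennreal (real ?n * ?V) * ennreal (k \<rho>) \<partial>lborel)"
  proof (intro nn_integral_cong)
    fix \<rho> :: real
    show "ennreal (radial_density ?n \<rho>) * ennreal (g \<rho> * \<rho>\<^sup>2 / \<rho> powr ?p) =
        ennreal (real ?n * ?V) * ennreal (k \<rho>)"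
    proof (cases "0 < \<rho>")
      case True
      have "radial_density ?n \<rho> * (g \<rho> * \<rho>\<^sup>2 / \<rho> powr ?p) =
          real ?n * ?V * (g \<rho> * (\<rho> ^ (?n - 1) * \<rho>\<^sup>2 / \<rho> powr ?p))"
        using True by (simp add: mult_ac)
      also have "\<dots> = real ?n * ?V * k \<rho>"
        using True by (simp only: power_eq) (simp add: k_def)
      finally have eq: "radial_density ?n \<rho> * (g \<rho> * \<rho>\<^sup>2 / \<rho> powr ?p) = real ?n * ?V * k \<rho>" .
      have "0 \<le> radial_density ?n \<rho>" "0 \<le> real ?n * ?V"
        using True by simp_all
      then show ?thesis
        by (metis eq ennreal_mult')
    qed (simp add: k_def)
  qed
  also have "\<dots> = ennreal (real ?n * ?V * (\<integral>\<rho>. k \<rho> \<partial>lborel))"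
    using integrable_radial_profile k_nonneg
    by (simp add: nn_integral_cmult nn_integral_eq_integral k_def ennreal_mult integral_nonneg_AE)
  finally show ?thesis
    by (simp add: k_def)
qed

lemma
  fixes \<xi> :: "real^'d::finite"
  shows integrable_radial_kernel_inner_square:
      "integrable lborel (\<lambda>z::real^'d. g (norm z) * (z \<bullet> \<xi>)\<^sup>2 / norm z powr (real CARD('d) + 2 * \<alpha>))"
    and integral_radial_kernel_inner_square:
      "(\<integral>z. g (norm z) * (z \<bullet> \<xi>)\<^sup>2 / norm z powr (real CARD('d) + 2 * \<alpha>) \<partial>lborel) =
        (norm \<xi>)\<^sup>2 * unit_ball_vol (real CARD('d)) *
          (\<integral>\<rho>. indicator {0<..} \<rho> * g \<rho> * \<rho> powr (1 - 2 * \<alpha>) \<partial>lborel)"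
proof -
  let ?p = "real CARD('d) + 2 * \<alpha>"
  let ?I = "\<integral>\<rho>. indicator {0<..} \<rho> * g \<rho> * \<rho> powr (1 - 2 * \<alpha>) \<partial>lborel"
  have nonneg: "0 \<le> g (norm z) * (norm z)\<^sup>2 / norm z powr ?p" for z :: "real^'d"
    using g_nonneg by simp
  have moment_int: "integrable lborel (\<lambda>z::real^'d. g (norm z) / norm z powr ?p * (norm z)\<^sup>2)"
    using nn_integral_radial_kernel_norm_square[where 'd = 'd] nonneg by (intro integrableI_nonneg) auto
  have "0 \<le> ?I"
    using g_nonneg by (intro integral_nonneg_AE) (auto simp: indicator_def)
  then have moment: "(\<integral>z. g (norm z) * (norm z)\<^sup>2 / norm z powr ?p \<partial>(lborel::(real^'d) measure)) =
      real CARD('d) * unit_ball_vol (real CARD('d)) * ?I"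
    using nn_integral_radial_kernel_norm_square[where 'd = 'd] nonneg
    by (subst integral_eq_nn_integral) auto
  show "(\<integral>z. g (norm z) * (z \<bullet> \<xi>)\<^sup>2 / norm z powr ?p \<partial>lborel) = (norm \<xi>)\<^sup>2 * unit_ball_vol (real CARD('d)) * ?I"
    using integral_radial_inner_square[of "\<lambda>\<rho>. g \<rho> / \<rho> powr ?p" \<xi>, OF _ moment_int]
    by (simp add: moment)
  have "(z \<bullet> \<xi>)\<^sup>2 \<le> (norm \<xi>)\<^sup>2 * (norm z)\<^sup>2" for z :: "real^'d"
    using Cauchy_Schwarz_ineq2[of z \<xi>] abs_le_square_iff[of "z \<bullet> \<xi>" "norm z * norm \<xi>"]
    by (simp add: power_mult_distrib mult.commute)
  then show "integrable lborel (\<lambda>z::real^'d. g (norm z) * (z \<bullet> \<xi>)\<^sup>2 / norm z powr ?p)"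
    using g_nonneg
    by (intro Bochner_Integration.integrable_bound[OF integrable_mult_right[OF moment_int, of "(norm \<xi>)\<^sup>2"]])
      (auto intro!: AE_I2 divide_right_mono mult_left_mono simp: abs_mult mult_ac)
qed

end

lemma nn_integral_lborel_scaleR:
  fixes f :: "real^'d::finite \<Rightarrow> ennreal"
  assumes [measurable]: "f \<in> borel_measurable borel" and "0 < c"
  shows "(\<integral>\<^sup>+y. f y \<partial>lborel) = ennreal (c ^ CARD('d)) * (\<integral>\<^sup>+z. f (c *\<^sub>R z) \<partial>lborel)"
proof -
  have "(\<integral>\<^sup>+y. f y \<partial>lborel) =
      (\<integral>\<^sup>+y. f y \<partial>density (distr lborel borel (\<lambda>x. 0 + c *\<^sub>R x)) (\<lambda>_. \<bar>c\<bar> ^ DIM(real^'d)))"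
    using lborel_affine[of c "0::real^'d"] \<open>0 < c\<close> by simp
  also have "\<dots> = (\<integral>\<^sup>+z. ennreal (c ^ CARD('d)) * f (c *\<^sub>R z) \<partial>lborel)"
    using \<open>0 < c\<close> by (subst nn_integral_density) (auto simp: nn_integral_distr)
  finally show ?thesis
    using \<open>0 < c\<close> by (simp add: nn_integral_cmult)
qed

section \<open>The peridynamic symbol\<close>

locale peridynamic_kernel =
  fixes \<kappa> \<alpha> :: real and chi :: "real \<Rightarrow> real"
  assumes \<kappa>_pos: "0 < \<kappa>" and \<alpha>_pos: "0 < \<alpha>" and \<alpha>_less_1: "\<alpha> < 1"
    and chi_measurable [measurable]: "chi \<in> borel_measurable borel"
    and chi_nonneg: "\<And>x. 0 \<le> chi x" and chi_le_1: "\<And>x. chi x \<le> 1"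
    and chi_outside: "\<And>x. 1 < \<bar>x\<bar> \<Longrightarrow> chi x = 0"
    and chi_inside: "\<And>x. \<bar>x\<bar> \<le> 1/2 \<Longrightarrow> chi x = 1"
begin

definition chi_moment :: real where
  "chi_moment = (\<integral>\<rho>. indicator {0<..} \<rho> * chi \<rho> * \<rho> powr (1 - 2 * \<alpha>) \<partial>lborel)"

lemma chi_vanishes: "1 < \<rho> \<Longrightarrow> chi \<rho> = 0"
  using chi_outside[of \<rho>] by simp

lemmas chi_kernel_integrals =
  integrable_radial_profile[OF chi_measurable chi_nonneg chi_le_1 chi_vanishes \<alpha>_pos \<alpha>_less_1]
  integrable_radial_kernel_inner_square[OF chi_measurable chi_nonneg chi_le_1 chi_vanishes \<alpha>_pos \<alpha>_less_1]
  integral_radial_kernel_inner_square[OF chi_measurable chi_nonneg chi_le_1 chi_vanishes \<alpha>_pos \<alpha>_less_1,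
    folded chi_moment_def]

lemma chi_moment_pos: "0 < chi_moment"
proof -
  have "0 < (1/2) powr (2 - 2 * \<alpha>) / (2 - 2 * \<alpha>)"
    using \<alpha>_less_1 by simp
  also have "\<dots> = (\<integral>\<rho>. indicator {0<..1/2} \<rho> * \<rho> powr (1 - 2 * \<alpha>) \<partial>lborel)"
    using \<alpha>_pos \<alpha>_less_1 by (subst integral_powr_Ioc) simp_all
  also have "\<dots> \<le> chi_moment"
    unfolding chi_moment_def
  proof (rule integral_mono[OF _ chi_kernel_integrals(1)])
    show "integrable lborel (\<lambda>\<rho>. indicator {0<..1/2} \<rho> * \<rho> powr (1 - 2 * \<alpha>))"
      using \<alpha>_pos \<alpha>_less_1 by (intro integrableI_nonneg) (auto simp: nn_integral_powr_Ioc)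
    show "indicator {0<..1/2} \<rho> * \<rho> powr (1 - 2 * \<alpha>) \<le> indicator {0<..} \<rho> * chi \<rho> * \<rho> powr (1 - 2 * \<alpha>)"
      for \<rho> using chi_inside[of \<rho>] chi_nonneg[of \<rho>] by (auto simp: indicator_def)
  qed
  finally show ?thesis .
qed

lemma gamma_const_sq:
  "(gamma_const TYPE('d::finite) \<kappa> \<alpha> chi)\<^sup>2 = \<kappa> / 2 * unit_ball_vol (real CARD('d)) * chi_moment"
  and gamma_const_pos: "0 < gamma_const TYPE('d::finite) \<kappa> \<alpha> chi"
proof -
  have "(LINT \<rho>:{0..1}|lborel. chi \<rho> * \<rho> powr (1 - 2 * \<alpha>)) = chi_moment"
    unfolding chi_moment_def set_lebesgue_integral_def
    by (intro Bochner_Integration.integral_cong_AE AE_I[where N = "{0}"])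
      (auto simp: indicator_def chi_vanishes not_le)
  then have "gamma_const TYPE('d) \<kappa> \<alpha> chi = sqrt (\<kappa> / 2 * unit_ball_vol (real CARD('d)) * chi_moment)"
    by (simp add: gamma_const_def measure_def emeasure_ball)
  moreover have "0 < \<kappa> / 2 * unit_ball_vol (real CARD('d)) * chi_moment"
    using \<kappa>_pos chi_moment_pos by simp
  ultimately show "(gamma_const TYPE('d) \<kappa> \<alpha> chi)\<^sup>2 = \<kappa> / 2 * unit_ball_vol (real CARD('d)) * chi_moment"
    and "0 < gamma_const TYPE('d) \<kappa> \<alpha> chi"
    by simp_all
qed

definition omega_integrand :: "real \<Rightarrow> real^'d::finite \<Rightarrow> real^'d \<Rightarrow> real" where
  "omega_integrand \<delta> \<xi> z = chi (norm z) * (1 - cos (\<delta> * (z \<bullet> \<xi>))) / norm z powr (real CARD('d) + 2 * \<alpha>)"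

lemma omega_integrand_measurable [measurable]: "omega_integrand \<delta> \<xi> \<in> borel_measurable borel"
  unfolding omega_integrand_def[abs_def] by measurable

lemma omega_integrand_nonneg: "0 \<le> omega_integrand \<delta> \<xi> (z::real^'d::finite)"
  using chi_nonneg by (simp add: omega_integrand_def)

lemma omega_integrand_le:
  fixes z \<xi> :: "real^'d::finite"
  shows "omega_integrand \<delta> \<xi> z \<le>
     \<delta>\<^sup>2 / 2 * (chi (norm z) * (z \<bullet> \<xi>)\<^sup>2 / norm z powr (real CARD('d) + 2 * \<alpha>))"
proof -
  have "chi (norm z) * (1 - cos (\<delta> * (z \<bullet> \<xi>))) \<le> chi (norm z) * ((\<delta> * (z \<bullet> \<xi>))\<^sup>2 / 2)"
    using chi_nonneg one_minus_cos_le by (intro mult_left_mono) auto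
  then have "omega_integrand \<delta> \<xi> z \<le>
      chi (norm z) * ((\<delta> * (z \<bullet> \<xi>))\<^sup>2 / 2) / norm z powr (real CARD('d) + 2 * \<alpha>)"
    unfolding omega_integrand_def by (intro divide_right_mono) auto
  then show ?thesis
    by (simp add: power_mult_distrib mult_ac)
qed

lemma integrable_omega_integrand: "integrable lborel (omega_integrand \<delta> (\<xi>::real^'d::finite))"
proof (rule Bochner_Integration.integrable_bound[OF integrable_mult_right[OF chi_kernel_integrals(2)]])
  let ?X = "\<lambda>z::real^'d. chi (norm z) * (z \<bullet> \<xi>)\<^sup>2 / norm z powr (real CARD('d) + 2 * \<alpha>)"
  have "norm (omega_integrand \<delta> \<xi> z) \<le> norm (\<delta>\<^sup>2 / 2 * ?X z)" for z
  proof -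
    have "0 \<le> \<delta>\<^sup>2 / 2 * ?X z"
      using chi_nonneg by simp
    have "norm (omega_integrand \<delta> \<xi> z) = omega_integrand \<delta> \<xi> z"
      using omega_integrand_nonneg[where z = z] by simp
    also have "\<dots> \<le> \<delta>\<^sup>2 / 2 * ?X z"
      by (rule omega_integrand_le)
    also have "\<dots> = norm (\<delta>\<^sup>2 / 2 * ?X z)"
      by (simp only: real_norm_def abs_of_nonneg[OF \<open>0 \<le> \<delta>\<^sup>2 / 2 * ?X z\<close>])
    finally show ?thesis .
  qed
  then show "AE z in lborel. norm (omega_integrand \<delta> \<xi> z) \<le> norm (\<delta>\<^sup>2 / 2 * ?X z)"
    by simp
qed measurable

lemma omega_sq_eq:
  fixes \<xi> :: "real^'d::finite"
  assumes "0 < \<delta>"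
  shows "(omega \<kappa> \<alpha> chi \<delta> \<xi>)\<^sup>2 = \<kappa> / \<delta>\<^sup>2 * (\<integral>z. omega_integrand \<delta> \<xi> z \<partial>lborel)"
    and omega_nonneg: "0 \<le> omega \<kappa> \<alpha> chi \<delta> \<xi>"
proof -
  let ?p = "real CARD('d) + 2 * \<alpha>"
  define F where "F y = chi (norm y / \<delta>) * (1 - cos (y \<bullet> \<xi>)) / norm y powr ?p" for y :: "real^'d"
  have [measurable]: "F \<in> borel_measurable borel" unfolding F_def by measurable
  have F_nonneg: "0 \<le> F y" for y
    using chi_nonneg by (simp add: F_def)
  have F_scaled: "F (\<delta> *\<^sub>R z) = 1 / \<delta> powr ?p * omega_integrand \<delta> \<xi> z" for z
  proof -
    have "(\<delta> * norm z) powr ?p = \<delta> powr ?p * norm z powr ?p"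
      using \<open>0 < \<delta>\<close> by (simp add: powr_mult)
    then show ?thesis
      using \<open>0 < \<delta>\<close> by (simp add: F_def omega_integrand_def)
  qed
  have "(\<integral>\<^sup>+y. ennreal (F y) \<partial>lborel) = ennreal (\<delta> ^ CARD('d)) * (\<integral>\<^sup>+z. ennreal (F (\<delta> *\<^sub>R z)) \<partial>lborel)"
    using \<open>0 < \<delta>\<close> by (intro nn_integral_lborel_scaleR) auto
  also have "\<dots> = ennreal (\<delta> ^ CARD('d)) *
      (ennreal (1 / \<delta> powr ?p) * (\<integral>\<^sup>+z. ennreal (omega_integrand \<delta> \<xi> z) \<partial>lborel))"
  proof -
    have "0 \<le> 1 / \<delta> powr ?p" by simp
    then have "(\<integral>\<^sup>+z. ennreal (F (\<delta> *\<^sub>R z)) \<partial>lborel) =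
        (\<integral>\<^sup>+z. ennreal (1 / \<delta> powr ?p) * ennreal (omega_integrand \<delta> \<xi> z) \<partial>lborel)"
      by (intro nn_integral_cong) (simp only: F_scaled ennreal_mult')
    then show ?thesis
      by (simp add: nn_integral_cmult)
  qed
  finally have "(\<integral>y. F y \<partial>lborel) = \<delta> ^ CARD('d) * (1 / \<delta> powr ?p) * (\<integral>z. omega_integrand \<delta> \<xi> z \<partial>lborel)"
    using \<open>0 < \<delta>\<close>
    by (simp add: integral_eq_nn_integral F_nonneg omega_integrand_nonneg enn2real_mult)
  also have "\<delta> ^ CARD('d) * (1 / \<delta> powr ?p) = \<delta> powr (2 * (1 - \<alpha>)) / \<delta>\<^sup>2"
  proof -
    have "\<delta> ^ CARD('d) * (1 / \<delta> powr ?p) = \<delta> powr (- 2 * \<alpha>)"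
      using \<open>0 < \<delta>\<close> by (simp add: powr_realpow[symmetric] powr_diff[symmetric])
    also have "\<dots> = \<delta> powr (2 * (1 - \<alpha>)) / \<delta> powr 2"
      by (simp only: powr_diff[symmetric]) (simp add: algebra_simps)
    finally show ?thesis
      using \<open>0 < \<delta>\<close> by simp
  qed
  finally have "\<kappa> / \<delta> powr (2 * (1 - \<alpha>)) * (\<integral>y. F y \<partial>lborel) =
      \<kappa> / \<delta>\<^sup>2 * (\<integral>z. omega_integrand \<delta> \<xi> z \<partial>lborel)"
    using \<open>0 < \<delta>\<close> by simp
  moreover have "0 \<le> \<kappa> / \<delta>\<^sup>2 * (\<integral>z. omega_integrand \<delta> \<xi> z \<partial>lborel)"
    using \<kappa>_pos omega_integrand_nonneg
    by (intro mult_nonneg_nonneg divide_nonneg_nonneg Bochner_Integration.integral_nonneg) auto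
  ultimately show "(omega \<kappa> \<alpha> chi \<delta> \<xi>)\<^sup>2 = \<kappa> / \<delta>\<^sup>2 * (\<integral>z. omega_integrand \<delta> \<xi> z \<partial>lborel)"
    and "0 \<le> omega \<kappa> \<alpha> chi \<delta> \<xi>"
    by (simp_all add: omega_def F_def)
qed

lemma omega_measurable [measurable]: "omega \<kappa> \<alpha> chi \<delta> \<in> borel_measurable (borel :: (real^'d::finite) measure)"
  unfolding omega_def[abs_def] by measurable

lemma omega_le_gamma:
  fixes \<xi> :: "real^'d::finite"
  assumes "0 < \<delta>"
  shows "omega \<kappa> \<alpha> chi \<delta> \<xi> \<le> gamma_const TYPE('d) \<kappa> \<alpha> chi * norm \<xi>"
proof -
  have "(\<integral>z. omega_integrand \<delta> \<xi> z \<partial>lborel) \<le>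
      (\<integral>z. \<delta>\<^sup>2 / 2 * (chi (norm z) * (z \<bullet> \<xi>)\<^sup>2 / norm z powr (real CARD('d) + 2 * \<alpha>)) \<partial>lborel)"
    using chi_nonneg
    by (intro integral_mono' integrable_mult_right chi_kernel_integrals(2) omega_integrand_le) auto
  also have "\<dots> = \<delta>\<^sup>2 / 2 * ((norm \<xi>)\<^sup>2 * unit_ball_vol (real CARD('d)) * chi_moment)"
    by (simp only: integral_mult_right_zero chi_kernel_integrals(3))
  finally have "\<kappa> / \<delta>\<^sup>2 * (\<integral>z. omega_integrand \<delta> \<xi> z \<partial>lborel) \<le>
      \<kappa> / \<delta>\<^sup>2 * (\<delta>\<^sup>2 / 2 * ((norm \<xi>)\<^sup>2 * unit_ball_vol (real CARD('d)) * chi_moment))"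
    using \<kappa>_pos by (intro mult_left_mono) auto
  then have "(omega \<kappa> \<alpha> chi \<delta> \<xi>)\<^sup>2 \<le>
      \<kappa> / \<delta>\<^sup>2 * (\<delta>\<^sup>2 / 2 * ((norm \<xi>)\<^sup>2 * unit_ball_vol (real CARD('d)) * chi_moment))"
    using \<open>0 < \<delta>\<close> by (simp only: omega_sq_eq)
  also have "\<dots> = (gamma_const TYPE('d) \<kappa> \<alpha> chi * norm \<xi>)\<^sup>2"
    using \<open>0 < \<delta>\<close> by (simp add: power_mult_distrib gamma_const_sq)
  finally show ?thesis
    by (rule power2_le_imp_le) (simp add: less_imp_le[OF gamma_const_pos])
qed

(* On the ball |z| <= r the kernel chi is 1 and |delta z.xi| <= 1, so 1 - cos >= (delta z.xi)^2 / 4 there. *)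
lemma omega_sq_ge:
  fixes \<xi> :: "real^'d::finite"
  assumes "0 < \<delta>" "0 < r" "r \<le> 1/2" "\<delta> * r * norm \<xi> \<le> 1"
  shows "\<kappa> / 4 * (norm \<xi>)\<^sup>2 * unit_ball_vol (real CARD('d)) * (r powr (2 - 2 * \<alpha>) / (2 - 2 * \<alpha>))
    \<le> (omega \<kappa> \<alpha> chi \<delta> \<xi>)\<^sup>2"
proof -
  let ?p = "real CARD('d) + 2 * \<alpha>"
  let ?V = "unit_ball_vol (real CARD('d))"
  let ?g = "indicator {..r} :: real \<Rightarrow> real"
  have g: "?g \<in> borel_measurable borel" "\<And>\<rho>. 0 \<le> ?g \<rho>" "\<And>\<rho>. ?g \<rho> \<le> 1" "\<And>\<rho>. 1 < \<rho> \<Longrightarrow> ?g \<rho> = 0"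
    using \<open>r \<le> 1/2\<close> by (auto simp: indicator_def)
  have "(\<integral>\<rho>. indicator {0<..} \<rho> * ?g \<rho> * \<rho> powr (1 - 2 * \<alpha>) \<partial>lborel) =
      (\<integral>\<rho>. indicator {0<..r} \<rho> * \<rho> powr (1 - 2 * \<alpha>) \<partial>lborel)"
    by (intro Bochner_Integration.integral_cong) (auto simp: indicator_def)
  also have "\<dots> = r powr (2 - 2 * \<alpha>) / (2 - 2 * \<alpha>)"
    using \<alpha>_less_1 \<open>0 < r\<close> by (subst integral_powr_Ioc) simp_all
  finally have "\<delta>\<^sup>2 / 4 * ((norm \<xi>)\<^sup>2 * ?V * (r powr (2 - 2 * \<alpha>) / (2 - 2 * \<alpha>))) =
      (\<integral>z. \<delta>\<^sup>2 / 4 * (?g (norm z) * (z \<bullet> \<xi>)\<^sup>2 / norm z powr ?p) \<partial>lborel)"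
    by (simp only: integral_mult_right_zero integral_radial_kernel_inner_square[OF g \<alpha>_pos \<alpha>_less_1])
  also have "\<dots> \<le> (\<integral>z. omega_integrand \<delta> \<xi> z \<partial>lborel)"
  proof (rule integral_mono'[OF integrable_omega_integrand])
    fix z :: "real^'d"
    show "\<delta>\<^sup>2 / 4 * (?g (norm z) * (z \<bullet> \<xi>)\<^sup>2 / norm z powr ?p) \<le> omega_integrand \<delta> \<xi> z"
    proof (cases "norm z \<le> r")
      case True
      have "\<bar>\<delta> * (z \<bullet> \<xi>)\<bar> \<le> \<delta> * (norm z * norm \<xi>)"
        using \<open>0 < \<delta>\<close> Cauchy_Schwarz_ineq2[of z \<xi>] by (simp add: abs_mult)
      also have "\<dots> \<le> \<delta> * r * norm \<xi>"
        using \<open>0 < \<delta>\<close> True by (simp add: mult_right_mono mult.assoc)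
      finally have "(\<delta> * (z \<bullet> \<xi>))\<^sup>2 / 4 \<le> 1 - cos (\<delta> * (z \<bullet> \<xi>))"
        using \<open>\<delta> * r * norm \<xi> \<le> 1\<close> by (intro one_minus_cos_ge_quarter) linarith
      then have "\<delta>\<^sup>2 / 4 * (z \<bullet> \<xi>)\<^sup>2 / norm z powr ?p \<le> (1 - cos (\<delta> * (z \<bullet> \<xi>))) / norm z powr ?p"
        by (intro divide_right_mono) (auto simp: power_mult_distrib)
      moreover have "chi (norm z) = 1"
        using True \<open>r \<le> 1/2\<close> by (intro chi_inside) simp
      ultimately show ?thesis
        using True by (simp add: omega_integrand_def)
    qed (simp add: omega_integrand_nonneg)
  qed (rule omega_integrand_nonneg)
  finally have "\<kappa> / \<delta>\<^sup>2 * (\<delta>\<^sup>2 / 4 * ((norm \<xi>)\<^sup>2 * ?V * (r powr (2 - 2 * \<alpha>) / (2 - 2 * \<alpha>))))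
      \<le> \<kappa> / \<delta>\<^sup>2 * (\<integral>z. omega_integrand \<delta> \<xi> z \<partial>lborel)"
    using \<kappa>_pos by (intro mult_left_mono) auto
  then show ?thesis
    using \<open>0 < \<delta>\<close> by (simp add: omega_sq_eq)
qed

lemma omega_ge_powr:
  obtains c where "0 < c"
    and "\<And>\<delta> (\<xi>::real^'d::finite). 0 < \<delta> \<Longrightarrow> \<delta> \<le> 1 \<Longrightarrow> 1 \<le> norm \<xi> \<Longrightarrow> c * norm \<xi> powr \<alpha> \<le> omega \<kappa> \<alpha> chi \<delta> \<xi>"
proof
  let ?V = "unit_ball_vol (real CARD('d))"
  define c where "c = sqrt (\<kappa> / 4 * ?V / (2 - 2 * \<alpha>) * 2 powr (2 * \<alpha> - 2))"
  show "0 < c"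
    using \<kappa>_pos \<alpha>_less_1 by (simp add: c_def)
  fix \<delta> :: real and \<xi> :: "real^'d"
  assume "0 < \<delta>" "\<delta> \<le> 1" "1 \<le> norm \<xi>"
  define r where "r = 1 / (2 * norm \<xi>)"
  have "\<xi> \<noteq> 0"
    using \<open>1 \<le> norm \<xi>\<close> by auto
  then have "\<delta> * r * norm \<xi> = \<delta> / 2"
    by (simp add: r_def)
  then have r: "0 < r" "r \<le> 1/2" "\<delta> * r * norm \<xi> \<le> 1"
    using \<open>\<delta> \<le> 1\<close> \<open>1 \<le> norm \<xi>\<close> by (auto simp: r_def divide_simps)
  have "(norm \<xi>)\<^sup>2 * r powr (2 - 2 * \<alpha>) = 2 powr (2 * \<alpha> - 2) * (norm \<xi> powr \<alpha>)\<^sup>2"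
  proof -
    have "r powr (2 - 2 * \<alpha>) = (2 * norm \<xi>) powr (2 * \<alpha> - 2)"
      using \<open>\<xi> \<noteq> 0\<close> by (simp add: r_def powr_divide powr_minus_divide[symmetric])
    also have "\<dots> = 2 powr (2 * \<alpha> - 2) * norm \<xi> powr (2 * \<alpha> - 2)"
      by (simp add: powr_mult)
    finally have "r powr (2 - 2 * \<alpha>) = 2 powr (2 * \<alpha> - 2) * norm \<xi> powr (2 * \<alpha> - 2)" .
    moreover have "(norm \<xi>)\<^sup>2 * norm \<xi> powr (2 * \<alpha> - 2) = (norm \<xi> powr \<alpha>)\<^sup>2"
    proof -
      have "(norm \<xi>)\<^sup>2 * norm \<xi> powr (2 * \<alpha> - 2) = norm \<xi> powr 2 * norm \<xi> powr (2 * \<alpha> - 2)"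
        using \<open>\<xi> \<noteq> 0\<close> by (simp add: powr_numeral)
      also have "\<dots> = norm \<xi> powr \<alpha> * norm \<xi> powr \<alpha>"
        by (simp only: powr_add[symmetric]) simp
      finally show ?thesis by (simp add: power2_eq_square)
    qed
    ultimately show ?thesis by (simp add: mult_ac)
  qed
  then have "(c * norm \<xi> powr \<alpha>)\<^sup>2 = \<kappa> / 4 * (norm \<xi>)\<^sup>2 * ?V * (r powr (2 - 2 * \<alpha>) / (2 - 2 * \<alpha>))"
    using \<kappa>_pos \<alpha>_less_1 by (simp add: c_def power_mult_distrib)
  also have "\<dots> \<le> (omega \<kappa> \<alpha> chi \<delta> \<xi>)\<^sup>2"
    using \<open>0 < \<delta>\<close> r by (rule omega_sq_ge)
  finally show "c * norm \<xi> powr \<alpha> \<le> omega \<kappa> \<alpha> chi \<delta> \<xi>"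
    using omega_nonneg[OF \<open>0 < \<delta>\<close>] by (rule power2_le_imp_le)
qed

lemma tendsto_integral_omega_integrand:
  fixes \<xi> :: "real^'d::finite"
  shows "((\<lambda>\<delta>. \<integral>z. omega_integrand \<delta> \<xi> z / \<delta>\<^sup>2 \<partial>lborel) \<longlongrightarrow>
    (norm \<xi>)\<^sup>2 * unit_ball_vol (real CARD('d)) * chi_moment / 2) (at_right 0)"
proof -
  let ?X = "\<lambda>z::real^'d. chi (norm z) * (z \<bullet> \<xi>)\<^sup>2 / norm z powr (real CARD('d) + 2 * \<alpha>) / 2"
  have "((\<lambda>\<delta>. \<integral>z. omega_integrand \<delta> \<xi> z / \<delta>\<^sup>2 \<partial>lborel) \<longlongrightarrow> (\<integral>z. ?X z \<partial>lborel)) (at_right 0)"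
  proof (rule integral_dominated_convergence_at_right[where w = ?X])
    show "integrable lborel ?X"
      by (intro integrable_divide chi_kernel_integrals(2))
    have "((\<lambda>\<delta>. chi (norm z) / norm z powr (real CARD('d) + 2 * \<alpha>) * ((1 - cos (\<delta> * (z \<bullet> \<xi>))) / \<delta>\<^sup>2))
        \<longlongrightarrow> chi (norm z) / norm z powr (real CARD('d) + 2 * \<alpha>) * ((z \<bullet> \<xi>)\<^sup>2 / 2)) (at_right 0)" for z
      by (intro tendsto_mult tendsto_const tendsto_mono[OF at_le tendsto_one_minus_cos_div_square]) simp
    then show "AE z in lborel. ((\<lambda>\<delta>. omega_integrand \<delta> \<xi> z / \<delta>\<^sup>2) \<longlongrightarrow> ?X z) (at_right 0)"
      by (simp add: omega_integrand_def mult_ac)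
    have "norm (omega_integrand \<delta> \<xi> z / \<delta>\<^sup>2) \<le> ?X z" if "0 < \<delta>" for \<delta> z
      using omega_integrand_nonneg[where z = z] omega_integrand_le[where z = z and \<delta> = \<delta>] that
      by (simp add: field_simps)
    then show "\<forall>\<^sub>F \<delta> in at_right 0. AE z in lborel. norm (omega_integrand \<delta> \<xi> z / \<delta>\<^sup>2) \<le> ?X z"
      by (auto simp: eventually_at_right_field intro!: exI[of _ 1])
  qed simp_all
  also have "(\<integral>z. ?X z \<partial>lborel) = (norm \<xi>)\<^sup>2 * unit_ball_vol (real CARD('d)) * chi_moment / 2"
    by (simp only: integral_divide_zero chi_kernel_integrals(3))
  finally show ?thesis .
qed

lemma tendsto_omega:
  fixes \<xi> :: "real^'d::finite"
  shows "((\<lambda>\<delta>. omega \<kappa> \<alpha> chi \<delta> \<xi>) \<longlongrightarrow> gamma_const TYPE('d) \<kappa> \<alpha> chi * norm \<xi>) (at_right 0)"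
proof -
  let ?\<gamma> = "gamma_const TYPE('d) \<kappa> \<alpha> chi * norm \<xi>"
  have "((\<lambda>\<delta>. \<kappa> * (\<integral>z. omega_integrand \<delta> \<xi> z / \<delta>\<^sup>2 \<partial>lborel)) \<longlongrightarrow>
      \<kappa> * ((norm \<xi>)\<^sup>2 * unit_ball_vol (real CARD('d)) * chi_moment / 2)) (at_right 0)"
    by (intro tendsto_mult_left tendsto_integral_omega_integrand)
  also have "\<kappa> * ((norm \<xi>)\<^sup>2 * unit_ball_vol (real CARD('d)) * chi_moment / 2) = ?\<gamma>\<^sup>2"
    by (simp add: gamma_const_sq power_mult_distrib)
  finally have "((\<lambda>\<delta>. (omega \<kappa> \<alpha> chi \<delta> \<xi>)\<^sup>2) \<longlongrightarrow> ?\<gamma>\<^sup>2) (at_right 0)"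
    by (rule Lim_transform_eventually)
      (auto simp: eventually_at_right_field omega_sq_eq integral_divide_zero intro!: exI[of _ 1])
  then have "((\<lambda>\<delta>. sqrt ((omega \<kappa> \<alpha> chi \<delta> \<xi>)\<^sup>2)) \<longlongrightarrow> sqrt (?\<gamma>\<^sup>2)) (at_right 0)"
    by (rule tendsto_real_sqrt)
  also have "sqrt (?\<gamma>\<^sup>2) = ?\<gamma>"
    using gamma_const_pos[where 'd = 'd] by simp
  finally show ?thesis
    by (rule Lim_transform_eventually)
      (auto simp: eventually_at_right_field omega_nonneg intro!: exI[of _ 1])
qed

end

section \<open>Convergence of the solutions for converging symbols\<close>

locale wave_symbol_approximation =
  fixes w :: "real \<Rightarrow> real^'d::finite \<Rightarrow> real" and \<gamma> c \<alpha> :: real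
  assumes w_measurable [measurable]: "\<And>\<delta>. w \<delta> \<in> borel_measurable borel"
    and w_nonneg: "\<And>\<delta> \<xi>. 0 < \<delta> \<Longrightarrow> \<delta> \<le> 1 \<Longrightarrow> 0 \<le> w \<delta> \<xi>"
    and w_le: "\<And>\<delta> \<xi>. 0 < \<delta> \<Longrightarrow> \<delta> \<le> 1 \<Longrightarrow> w \<delta> \<xi> \<le> \<gamma> * norm \<xi>"
    and w_ge: "\<And>\<delta> \<xi>. 0 < \<delta> \<Longrightarrow> \<delta> \<le> 1 \<Longrightarrow> 1 \<le> norm \<xi> \<Longrightarrow> c * norm \<xi> powr \<alpha> \<le> w \<delta> \<xi>"
    and tendsto_w: "\<And>\<xi>. ((\<lambda>\<delta>. w \<delta> \<xi>) \<longlongrightarrow> \<gamma> * norm \<xi>) (at_right 0)"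
    and c_pos: "0 < c" and \<alpha>_nonneg: "0 \<le> \<alpha>" and \<alpha>_le_1: "\<alpha> \<le> 1"
begin

lemma gamma_nonneg: "0 \<le> \<gamma>"
proof -
  obtain \<xi> :: "real^'d" where "norm \<xi> = 1"
    using vector_choose_size[of 1] by auto
  then show ?thesis
    using w_nonneg[of 1 \<xi>] w_le[of 1 \<xi>] by simp
qed

lemma powr_le_gamma: "1 \<le> norm (\<xi>::real^'d) \<Longrightarrow> c * norm \<xi> powr \<alpha> \<le> \<gamma> * norm \<xi>"
  using w_ge[of 1 \<xi>] w_le[of 1 \<xi>] by simp

context
  fixes T :: real
  assumes T_nonneg: "0 \<le> T"
begin

definition sin_div_bound :: "real^'d \<Rightarrow> real" where
  "sin_div_bound \<xi> = (if 1 \<le> norm \<xi> then 1 / (c * norm \<xi> powr \<alpha>) else T)"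

lemma sin_div_bound_nonneg: "0 \<le> sin_div_bound \<xi>"
  using c_pos T_nonneg by (simp add: sin_div_bound_def)

lemma abs_sin_div_le_bound:
  assumes "t \<in> {0..T}" and "1 \<le> norm \<xi> \<Longrightarrow> c * norm \<xi> powr \<alpha> \<le> a"
  shows "\<bar>sin_div a t\<bar> \<le> sin_div_bound \<xi>"
proof (cases "1 \<le> norm \<xi>")
  case True
  then have "\<xi> \<noteq> 0"
    by auto
  then have "0 < c * norm \<xi> powr \<alpha>"
    using c_pos by simp
  then have "\<bar>sin_div a t\<bar> \<le> 1 / a"
    using assms(2)[OF True] by (intro abs_sin_div_le_inverse) linarith
  also have "\<dots> \<le> 1 / (c * norm \<xi> powr \<alpha>)"
    using assms(2)[OF True] \<open>0 < c * norm \<xi> powr \<alpha>\<close> by (intro divide_left_mono) auto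
  finally show ?thesis
    using True by (simp add: sin_div_bound_def)
next
  case False
  then show ?thesis
    using abs_sin_div_le[of t a] assms(1) by (simp add: sin_div_bound_def)
qed

lemma weight_mult_sin_div_bound_sq_le:
  "(1 + (norm \<xi>)\<^sup>2) powr s * (sin_div_bound \<xi>)\<^sup>2 \<le> (2 * T\<^sup>2 + 2 / c\<^sup>2) * (1 + (norm \<xi>)\<^sup>2) powr (s - \<alpha>)"
proof -
  let ?P = "1 + (norm \<xi>)\<^sup>2"
  have "(sin_div_bound \<xi>)\<^sup>2 * ?P powr \<alpha> \<le> 2 * T\<^sup>2 + 2 / c\<^sup>2"
  proof (cases "1 \<le> norm \<xi>")
    case True
    then have "\<xi> \<noteq> 0"
      by auto
    have "?P powr \<alpha> \<le> 2 * (norm \<xi> powr \<alpha>)\<^sup>2"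
      using True \<alpha>_nonneg \<alpha>_le_1 by (rule one_plus_square_powr_le)
    then have "(sin_div_bound \<xi>)\<^sup>2 * ?P powr \<alpha> \<le> (sin_div_bound \<xi>)\<^sup>2 * (2 * (norm \<xi> powr \<alpha>)\<^sup>2)"
      by (intro mult_left_mono) auto
    also have "\<dots> = 2 / c\<^sup>2"
      using True \<open>\<xi> \<noteq> 0\<close> c_pos by (simp add: sin_div_bound_def power_divide power_mult_distrib)
    finally show ?thesis
      using zero_le_power2[of T] by linarith
  next
    case False
    then have "?P \<le> 2"
      by (simp add: abs_square_le_1)
    then have "?P powr \<alpha> \<le> 2 powr 1"
      using \<alpha>_nonneg \<alpha>_le_1 by (intro order_trans[OF powr_mono2 powr_mono]) auto
    then have "T\<^sup>2 * ?P powr \<alpha> \<le> T\<^sup>2 * 2"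
      by (intro mult_left_mono) auto
    moreover have "(sin_div_bound \<xi>)\<^sup>2 * ?P powr \<alpha> = T\<^sup>2 * ?P powr \<alpha>"
      using False by (simp add: sin_div_bound_def)
    moreover have "0 \<le> 2 / c\<^sup>2"
      by simp
    ultimately show ?thesis
      by linarith
  qed
  then have "?P powr (s - \<alpha>) * ((sin_div_bound \<xi>)\<^sup>2 * ?P powr \<alpha>) \<le> ?P powr (s - \<alpha>) * (2 * T\<^sup>2 + 2 / c\<^sup>2)"
    by (intro mult_left_mono) auto
  moreover have "?P powr s = ?P powr (s - \<alpha>) * ?P powr \<alpha>"
    by (simp add: powr_add[symmetric])
  ultimately show ?thesis
    by (simp add: mult_ac)
qed

(* Bounds, uniform in t in [0,T], for the differences of the multipliers cos (a t), sin_div a t and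
   a sin (a t) at a = w delta xi and a = gamma |xi|: the first argument of min gives domination, the
   second tends to 0 as delta -> 0. *)
definition cos_err :: "real \<Rightarrow> real^'d \<Rightarrow> real" where
  "cos_err \<delta> \<xi> = min 2 (T * \<bar>w \<delta> \<xi> - \<gamma> * norm \<xi>\<bar>)"

definition sin_div_err :: "real \<Rightarrow> real^'d \<Rightarrow> real" where
  "sin_div_err \<delta> \<xi> = min (2 * sin_div_bound \<xi>) (T\<^sup>2 * \<bar>w \<delta> \<xi> - \<gamma> * norm \<xi>\<bar>)"

definition mult_sin_err :: "real \<Rightarrow> real^'d \<Rightarrow> real" where
  "mult_sin_err \<delta> \<xi> = min (2 * (\<gamma> * norm \<xi>)) (\<bar>w \<delta> \<xi> - \<gamma> * norm \<xi>\<bar> * (1 + \<gamma> * norm \<xi> * T))"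

lemma err_measurable [measurable]:
  "cos_err \<delta> \<in> borel_measurable borel" "sin_div_err \<delta> \<in> borel_measurable borel"
  "mult_sin_err \<delta> \<in> borel_measurable borel"
  unfolding cos_err_def[abs_def] sin_div_err_def[abs_def] mult_sin_err_def[abs_def] sin_div_bound_def[abs_def]
  by measurable

lemma err_bounds:
  "0 \<le> cos_err \<delta> \<xi>" "cos_err \<delta> \<xi> \<le> 2"
  "0 \<le> sin_div_err \<delta> \<xi>" "sin_div_err \<delta> \<xi> \<le> 2 * sin_div_bound \<xi>"
  "0 \<le> mult_sin_err \<delta> \<xi>" "mult_sin_err \<delta> \<xi> \<le> 2 * (\<gamma> * norm \<xi>)"
  using T_nonneg sin_div_bound_nonneg[of \<xi>] gamma_nonneg
  by (auto simp: cos_err_def sin_div_err_def mult_sin_err_def)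

lemma tendsto_err:
  "((\<lambda>\<delta>. cos_err \<delta> \<xi>) \<longlongrightarrow> 0) (at_right 0)"
  "((\<lambda>\<delta>. sin_div_err \<delta> \<xi>) \<longlongrightarrow> 0) (at_right 0)"
  "((\<lambda>\<delta>. mult_sin_err \<delta> \<xi>) \<longlongrightarrow> 0) (at_right 0)"
proof -
  have d: "((\<lambda>\<delta>. \<bar>w \<delta> \<xi> - \<gamma> * norm \<xi>\<bar>) \<longlongrightarrow> 0) (at_right 0)"
    using tendsto_rabs_zero[OF LIM_zero[OF tendsto_w]] .
  show "((\<lambda>\<delta>. cos_err \<delta> \<xi>) \<longlongrightarrow> 0) (at_right 0)"
    using tendsto_min[OF tendsto_const tendsto_mult_right_zero[OF d, of T], of 2]
    by (simp add: cos_err_def[abs_def])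
  show "((\<lambda>\<delta>. sin_div_err \<delta> \<xi>) \<longlongrightarrow> 0) (at_right 0)"
    using tendsto_min[OF tendsto_const tendsto_mult_right_zero[OF d, of "T\<^sup>2"], of "2 * sin_div_bound \<xi>"]
      sin_div_bound_nonneg[of \<xi>]
    by (simp add: sin_div_err_def[abs_def])
  show "((\<lambda>\<delta>. mult_sin_err \<delta> \<xi>) \<longlongrightarrow> 0) (at_right 0)"
    using tendsto_min[OF tendsto_const tendsto_mult_left_zero[OF d, of "1 + \<gamma> * norm \<xi> * T"],
        of "2 * (\<gamma> * norm \<xi>)"] gamma_nonneg
    by (simp add: mult_sin_err_def[abs_def])
qed

lemma abs_cos_diff_le_cos_err:
  assumes "t \<in> {0..T}"
  shows "\<bar>cos (w \<delta> \<xi> * t) - cos (\<gamma> * norm \<xi> * t)\<bar> \<le> cos_err \<delta> \<xi>"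
proof -
  let ?a = "w \<delta> \<xi>" and ?b = "\<gamma> * norm \<xi>"
  have "\<bar>cos (?a * t) - cos (?b * t)\<bar> \<le> 2"
    using abs_triangle_ineq4[of "cos (?a * t)" "cos (?b * t)"] abs_cos_le_one[of "?a * t"]
      abs_cos_le_one[of "?b * t"] by linarith
  moreover have "\<bar>cos (?a * t) - cos (?b * t)\<bar> \<le> T * \<bar>?a - ?b\<bar>"
    using abs_cos_mult_diff_le[of t ?a ?b] mult_right_mono[of t T "\<bar>?a - ?b\<bar>"] assms by auto
  ultimately show ?thesis
    by (simp add: cos_err_def)
qed

definition sol_err_density ::
    "real \<Rightarrow> (real^'d \<Rightarrow> complex^'d) \<Rightarrow> (real^'d \<Rightarrow> complex^'d) \<Rightarrow> real \<Rightarrow> real^'d \<Rightarrow> real" where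
  "sol_err_density s u0 v0 \<delta> \<xi> = (1 + (norm \<xi>)\<^sup>2) powr s *
     (2 * (cos_err \<delta> \<xi>)\<^sup>2 * (norm (u0 \<xi>))\<^sup>2 + 2 * (sin_div_err \<delta> \<xi>)\<^sup>2 * (norm (v0 \<xi>))\<^sup>2)"

definition sol_dt_err_density ::
    "real \<Rightarrow> (real^'d \<Rightarrow> complex^'d) \<Rightarrow> (real^'d \<Rightarrow> complex^'d) \<Rightarrow> real \<Rightarrow> real^'d \<Rightarrow> real" where
  "sol_dt_err_density s u0 v0 \<delta> \<xi> = (1 + (norm \<xi>)\<^sup>2) powr (s - 1) *
     (2 * (mult_sin_err \<delta> \<xi>)\<^sup>2 * (norm (u0 \<xi>))\<^sup>2 + 2 * (cos_err \<delta> \<xi>)\<^sup>2 * (norm (v0 \<xi>))\<^sup>2)"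

lemma err_densities_nonneg:
  "0 \<le> sol_err_density s u0 v0 \<delta> \<xi>" "0 \<le> sol_dt_err_density s u0 v0 \<delta> \<xi>"
  by (simp_all add: sol_err_density_def sol_dt_err_density_def)

lemma weighted_norm_sol_hat_diff_le:
  assumes "0 < \<delta>" "\<delta> \<le> 1" "t \<in> {0..T}"
  shows "(1 + (norm \<xi>)\<^sup>2) powr s * (norm (sol_hat (w \<delta>) u0 v0 t \<xi> - sol_hat (\<lambda>\<xi>. \<gamma> * norm \<xi>) u0 v0 t \<xi>))\<^sup>2
    \<le> sol_err_density s u0 v0 \<delta> \<xi>"
proof -
  let ?a = "w \<delta> \<xi>" and ?b = "\<gamma> * norm \<xi>"
  have "\<bar>cos (?a * t) - cos (?b * t)\<bar> \<le> cos_err \<delta> \<xi>"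
    using assms(3) by (rule abs_cos_diff_le_cos_err)
  moreover have "\<bar>sin_div ?a t - sin_div ?b t\<bar> \<le> sin_div_err \<delta> \<xi>"
  proof -
    have "\<bar>sin_div ?a t\<bar> \<le> sin_div_bound \<xi>" "\<bar>sin_div ?b t\<bar> \<le> sin_div_bound \<xi>"
      using assms w_ge powr_le_gamma by (auto intro!: abs_sin_div_le_bound)
    moreover have "t\<^sup>2 * \<bar>?a - ?b\<bar> \<le> T\<^sup>2 * \<bar>?a - ?b\<bar>"
      using assms(3) by (intro mult_right_mono power_mono) auto
    ultimately show ?thesis
      using abs_sin_div_diff_le[of t ?a ?b] assms(3) by (auto simp: sin_div_err_def)
  qed
  ultimately have "(norm (sol_hat (w \<delta>) u0 v0 t \<xi> - sol_hat (\<lambda>\<xi>. \<gamma> * norm \<xi>) u0 v0 t \<xi>))\<^sup>2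
      \<le> 2 * (cos_err \<delta> \<xi>)\<^sup>2 * (norm (u0 \<xi>))\<^sup>2 + 2 * (sin_div_err \<delta> \<xi>)\<^sup>2 * (norm (v0 \<xi>))\<^sup>2"
    using norm_scaleR_add_square_le[of "cos (?a * t) - cos (?b * t)" "cos_err \<delta> \<xi>"
        "sin_div ?a t - sin_div ?b t" "sin_div_err \<delta> \<xi>" "u0 \<xi>" "v0 \<xi>"]
    by (simp add: sol_hat_def algebra_simps)
  then show ?thesis
    unfolding sol_err_density_def by (rule mult_left_mono) simp
qed

lemma weighted_norm_sol_dt_hat_diff_le:
  assumes "0 < \<delta>" "\<delta> \<le> 1" "t \<in> {0..T}"
  shows "(1 + (norm \<xi>)\<^sup>2) powr (s - 1) *
      (norm (sol_dt_hat (w \<delta>) u0 v0 t \<xi> - sol_dt_hat (\<lambda>\<xi>. \<gamma> * norm \<xi>) u0 v0 t \<xi>))\<^sup>2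
    \<le> sol_dt_err_density s u0 v0 \<delta> \<xi>"
proof -
  let ?a = "w \<delta> \<xi>" and ?b = "\<gamma> * norm \<xi>"
  have "0 \<le> ?a" "?a \<le> ?b"
    using w_nonneg w_le assms by auto
  have "\<bar>?a * sin (?a * t) - ?b * sin (?b * t)\<bar> \<le> mult_sin_err \<delta> \<xi>"
  proof -
    have "\<bar>?a * sin (?a * t) - ?b * sin (?b * t)\<bar> \<le> ?a + ?b"
      using \<open>0 \<le> ?a\<close> \<open>?a \<le> ?b\<close> abs_triangle_ineq4[of "?a * sin (?a * t)" "?b * sin (?b * t)"]
        mult_left_le[of "\<bar>sin (?a * t)\<bar>" ?a] mult_left_le[of "\<bar>sin (?b * t)\<bar>" ?b] gamma_nonneg
      by (simp add: abs_mult)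
    moreover have "\<bar>?a - ?b\<bar> * (1 + ?b * t) \<le> \<bar>?a - ?b\<bar> * (1 + ?b * T)"
      using assms(3) \<open>0 \<le> ?a\<close> \<open>?a \<le> ?b\<close> by (intro mult_left_mono add_left_mono mult_left_mono) auto
    ultimately show ?thesis
      using abs_mult_sin_diff_le[of ?b t ?a] assms(3) \<open>0 \<le> ?a\<close> \<open>?a \<le> ?b\<close>
      by (auto simp: mult_sin_err_def mult_ac)
  qed
  moreover have "\<bar>cos (?a * t) - cos (?b * t)\<bar> \<le> cos_err \<delta> \<xi>"
    using assms(3) by (rule abs_cos_diff_le_cos_err)
  ultimately have "(norm (sol_dt_hat (w \<delta>) u0 v0 t \<xi> - sol_dt_hat (\<lambda>\<xi>. \<gamma> * norm \<xi>) u0 v0 t \<xi>))\<^sup>2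
      \<le> 2 * (mult_sin_err \<delta> \<xi>)\<^sup>2 * (norm (u0 \<xi>))\<^sup>2 + 2 * (cos_err \<delta> \<xi>)\<^sup>2 * (norm (v0 \<xi>))\<^sup>2"
    using norm_scaleR_add_square_le[of "- (?a * sin (?a * t) - ?b * sin (?b * t))" "mult_sin_err \<delta> \<xi>"
        "cos (?a * t) - cos (?b * t)" "cos_err \<delta> \<xi>" "u0 \<xi>" "v0 \<xi>"]
    by (simp add: sol_dt_hat_def algebra_simps)
  then show ?thesis
    unfolding sol_dt_err_density_def by (rule mult_left_mono) simp
qed

lemma weighted_err_sq_le:
  fixes \<xi> :: "real^'d"
  defines "P \<equiv> 1 + (norm \<xi>)\<^sup>2"
  shows "2 * P powr s * (cos_err \<delta> \<xi>)\<^sup>2 \<le> 8 * P powr s"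
    and "2 * P powr s * (sin_div_err \<delta> \<xi>)\<^sup>2 \<le> 8 * (2 * T\<^sup>2 + 2 / c\<^sup>2) * P powr (s - \<alpha>)"
    and "2 * P powr (s - 1) * (mult_sin_err \<delta> \<xi>)\<^sup>2 \<le> 8 * \<gamma>\<^sup>2 * P powr s"
    and "2 * P powr (s - 1) * (cos_err \<delta> \<xi>)\<^sup>2 \<le> 8 * P powr (s - \<alpha>)"
proof -
  have "1 \<le> P" unfolding P_def by simp
  have cos_sq: "(cos_err \<delta> \<xi>)\<^sup>2 \<le> 4"
    using err_bounds(1,2)[of \<delta> \<xi>] power_mono[of "cos_err \<delta> \<xi>" 2 2] by simp
  then show "2 * P powr s * (cos_err \<delta> \<xi>)\<^sup>2 \<le> 8 * P powr s"
    by (intro order_trans[OF mult_left_mono[OF cos_sq]]) simp_all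
  have "(sin_div_err \<delta> \<xi>)\<^sup>2 \<le> 4 * (sin_div_bound \<xi>)\<^sup>2"
    using err_bounds(3,4)[of \<delta> \<xi>] power_mono[of "sin_div_err \<delta> \<xi>" "2 * sin_div_bound \<xi>" 2]
    by (simp add: power_mult_distrib)
  from mult_left_mono[OF this, of "2 * P powr s"]
  have "2 * P powr s * (sin_div_err \<delta> \<xi>)\<^sup>2 \<le> 8 * (P powr s * (sin_div_bound \<xi>)\<^sup>2)"
    by (simp add: mult_ac)
  also have "\<dots> \<le> 8 * ((2 * T\<^sup>2 + 2 / c\<^sup>2) * P powr (s - \<alpha>))"
    using weight_mult_sin_div_bound_sq_le[where s = s and \<xi> = \<xi>] unfolding P_def by simp
  finally show "2 * P powr s * (sin_div_err \<delta> \<xi>)\<^sup>2 \<le> 8 * (2 * T\<^sup>2 + 2 / c\<^sup>2) * P powr (s - \<alpha>)"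
    by (simp only: mult.assoc)
  have "(mult_sin_err \<delta> \<xi>)\<^sup>2 \<le> 4 * \<gamma>\<^sup>2 * P"
  proof -
    have "(mult_sin_err \<delta> \<xi>)\<^sup>2 \<le> (2 * (\<gamma> * norm \<xi>))\<^sup>2"
      using err_bounds(5,6)[of \<delta> \<xi>] by (intro power_mono) auto
    also have "\<dots> \<le> 4 * \<gamma>\<^sup>2 * P"
      unfolding P_def by (simp add: power_mult_distrib mult_left_mono)
    finally show ?thesis .
  qed
  from mult_left_mono[OF this, of "2 * P powr (s - 1)"]
  have "2 * P powr (s - 1) * (mult_sin_err \<delta> \<xi>)\<^sup>2 \<le> 8 * \<gamma>\<^sup>2 * (P powr (s - 1) * P)"
    by (simp add: mult_ac)
  also have "P powr (s - 1) * P = P powr s"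
    using \<open>1 \<le> P\<close> by (simp add: powr_mult_base mult.commute)
  finally show "2 * P powr (s - 1) * (mult_sin_err \<delta> \<xi>)\<^sup>2 \<le> 8 * \<gamma>\<^sup>2 * P powr s" .
  have "2 * P powr (s - 1) * (cos_err \<delta> \<xi>)\<^sup>2 \<le> 8 * P powr (s - 1)"
    by (intro order_trans[OF mult_left_mono[OF cos_sq]]) simp_all
  also have "P powr (s - 1) \<le> P powr (s - \<alpha>)"
    using \<open>1 \<le> P\<close> \<alpha>_le_1 by (intro powr_mono) auto
  finally show "2 * P powr (s - 1) * (cos_err \<delta> \<xi>)\<^sup>2 \<le> 8 * P powr (s - \<alpha>)"
    by simp
qed

lemma
  assumes u0: "in_Hs s u0" and v0: "in_Hs (s - \<alpha>) v0"
  shows integrable_err_densities: "0 < \<delta> \<Longrightarrow> \<delta> \<le> 1 \<Longrightarrow> integrable lborel (sol_err_density s u0 v0 \<delta>)"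
      "0 < \<delta> \<Longrightarrow> \<delta> \<le> 1 \<Longrightarrow> integrable lborel (sol_dt_err_density s u0 v0 \<delta>)"
    and integral_err_densities_tendsto_0:
      "((\<lambda>\<delta>. \<integral>\<xi>. sol_err_density s u0 v0 \<delta> \<xi> \<partial>lborel) \<longlongrightarrow> 0) (at_right 0)"
      "((\<lambda>\<delta>. \<integral>\<xi>. sol_dt_err_density s u0 v0 \<delta> \<xi> \<partial>lborel) \<longlongrightarrow> 0) (at_right 0)"
proof -
  define P where "P \<xi> = 1 + (norm \<xi>)\<^sup>2" for \<xi> :: "real^'d"
  define U where "U \<xi> = (norm (u0 \<xi>))\<^sup>2" for \<xi>
  define V where "V \<xi> = (norm (v0 \<xi>))\<^sup>2" for \<xi>
  define A1 where "A1 \<delta> \<xi> = 2 * P \<xi> powr s * (cos_err \<delta> \<xi>)\<^sup>2" for \<delta> \<xi>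
  define A2 where "A2 \<delta> \<xi> = 2 * P \<xi> powr s * (sin_div_err \<delta> \<xi>)\<^sup>2" for \<delta> \<xi>
  define A3 where "A3 \<delta> \<xi> = 2 * P \<xi> powr (s - 1) * (mult_sin_err \<delta> \<xi>)\<^sup>2" for \<delta> \<xi>
  define A4 where "A4 \<delta> \<xi> = 2 * P \<xi> powr (s - 1) * (cos_err \<delta> \<xi>)\<^sup>2" for \<delta> \<xi>
  have densities: "sol_err_density s u0 v0 \<delta> = (\<lambda>\<xi>. A1 \<delta> \<xi> * U \<xi> + A2 \<delta> \<xi> * V \<xi>)"
    "sol_dt_err_density s u0 v0 \<delta> = (\<lambda>\<xi>. A3 \<delta> \<xi> * U \<xi> + A4 \<delta> \<xi> * V \<xi>)" for \<delta>
    by (auto simp: sol_err_density_def sol_dt_err_density_def A1_def A2_def A3_def A4_def P_def U_def V_def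
        algebra_simps)
  have [measurable]: "u0 \<in> borel_measurable borel" "v0 \<in> borel_measurable borel"
    using u0 v0 by (simp_all add: in_Hs_def)
  have [measurable]: "P \<in> borel_measurable borel" "U \<in> borel_measurable lborel" "V \<in> borel_measurable lborel"
    unfolding P_def[abs_def] U_def[abs_def] V_def[abs_def] by measurable
  have A_meas: "A1 \<delta> \<in> borel_measurable lborel" "A2 \<delta> \<in> borel_measurable lborel"
    "A3 \<delta> \<in> borel_measurable lborel" "A4 \<delta> \<in> borel_measurable lborel" for \<delta>
    unfolding A1_def[abs_def] A2_def[abs_def] A3_def[abs_def] A4_def[abs_def] by measurable
  have int_U: "integrable lborel (\<lambda>\<xi>. C * P \<xi> powr s * U \<xi>)" for C
    using in_Hs_integrable[OF u0] by (simp add: P_def U_def mult.assoc)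
  have int_V: "integrable lborel (\<lambda>\<xi>. C * P \<xi> powr (s - \<alpha>) * V \<xi>)" for C
    using in_Hs_integrable[OF v0] by (simp add: P_def V_def mult.assoc)
  have U_nonneg: "0 \<le> U \<xi>" and V_nonneg: "0 \<le> V \<xi>" for \<xi>
    by (simp_all add: U_def V_def)
  have A_bounds:
    "0 \<le> A1 \<delta> \<xi> \<and> A1 \<delta> \<xi> \<le> 8 * P \<xi> powr s"
    "0 \<le> A2 \<delta> \<xi> \<and> A2 \<delta> \<xi> \<le> 8 * (2 * T\<^sup>2 + 2 / c\<^sup>2) * P \<xi> powr (s - \<alpha>)"
    "0 \<le> A3 \<delta> \<xi> \<and> A3 \<delta> \<xi> \<le> 8 * \<gamma>\<^sup>2 * P \<xi> powr s"
    "0 \<le> A4 \<delta> \<xi> \<and> A4 \<delta> \<xi> \<le> 8 * P \<xi> powr (s - \<alpha>)" for \<delta> \<xi>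
    using weighted_err_sq_le[where s = s and \<xi> = \<xi> and \<delta> = \<delta>, folded P_def]
    by (simp_all add: A1_def A2_def A3_def A4_def)
  have tendsto_A: "((\<lambda>\<delta>. A1 \<delta> \<xi>) \<longlongrightarrow> 0) (at_right 0)" "((\<lambda>\<delta>. A2 \<delta> \<xi>) \<longlongrightarrow> 0) (at_right 0)"
    "((\<lambda>\<delta>. A3 \<delta> \<xi>) \<longlongrightarrow> 0) (at_right 0)" "((\<lambda>\<delta>. A4 \<delta> \<xi>) \<longlongrightarrow> 0) (at_right 0)" for \<xi>
    unfolding A1_def A2_def A3_def A4_def
    using tendsto_err[of \<xi>] by (auto intro!: tendsto_mult_right_zero tendsto_power_zero)
  note A_props = integrable_dominated_weight integral_dominated_weight_tendsto_0
  note A1 = A_props[OF A_meas(1) _ int_U[of 8] U_nonneg A_bounds(1) tendsto_A(1), simplified]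
  note A2 = A_props[OF A_meas(2) _ int_V[of "8 * (2 * T\<^sup>2 + 2 / c\<^sup>2)"] V_nonneg A_bounds(2) tendsto_A(2),
      simplified]
  note A3 = A_props[OF A_meas(3) _ int_U[of "8 * \<gamma>\<^sup>2"] U_nonneg A_bounds(3) tendsto_A(3), simplified]
  note A4 = A_props[OF A_meas(4) _ int_V[of 8] V_nonneg A_bounds(4) tendsto_A(4), simplified]
  show "0 < \<delta> \<Longrightarrow> \<delta> \<le> 1 \<Longrightarrow> integrable lborel (sol_err_density s u0 v0 \<delta>)"
    "0 < \<delta> \<Longrightarrow> \<delta> \<le> 1 \<Longrightarrow> integrable lborel (sol_dt_err_density s u0 v0 \<delta>)"
    using A1(1) A2(1) A3(1) A4(1) by (simp_all add: densities)
  have ev: "\<forall>\<^sub>F \<delta> in at_right 0. (\<integral>\<xi>. A1 \<delta> \<xi> * U \<xi> \<partial>lborel) + (\<integral>\<xi>. A2 \<delta> \<xi> * V \<xi> \<partial>lborel) =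
      (\<integral>\<xi>. sol_err_density s u0 v0 \<delta> \<xi> \<partial>lborel)"
    "\<forall>\<^sub>F \<delta> in at_right 0. (\<integral>\<xi>. A3 \<delta> \<xi> * U \<xi> \<partial>lborel) + (\<integral>\<xi>. A4 \<delta> \<xi> * V \<xi> \<partial>lborel) =
      (\<integral>\<xi>. sol_dt_err_density s u0 v0 \<delta> \<xi> \<partial>lborel)"
    unfolding eventually_at_right_field densities
    by (intro exI[of _ 1]; simp add: A1(1) A2(1) A3(1) A4(1))+
  show "((\<lambda>\<delta>. \<integral>\<xi>. sol_err_density s u0 v0 \<delta> \<xi> \<partial>lborel) \<longlongrightarrow> 0) (at_right 0)"
    by (rule Lim_transform_eventually[OF tendsto_add_zero[OF A1(2) A2(2)] ev(1)])
  show "((\<lambda>\<delta>. \<integral>\<xi>. sol_dt_err_density s u0 v0 \<delta> \<xi> \<partial>lborel) \<longlongrightarrow> 0) (at_right 0)"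
    by (rule Lim_transform_eventually[OF tendsto_add_zero[OF A3(2) A4(2)] ev(2)])
qed

lemma SUP_Hs_norm_diff_tendsto_0:
  assumes "in_Hs s u0" and "in_Hs (s - \<alpha>) v0"
  shows "((\<lambda>\<delta>. SUP t\<in>{0..T}.
      Hs_norm s (\<lambda>\<xi>. sol_hat (w \<delta>) u0 v0 t \<xi> - sol_hat (\<lambda>\<xi>. \<gamma> * norm \<xi>) u0 v0 t \<xi>) +
      Hs_norm (s - 1) (\<lambda>\<xi>. sol_dt_hat (w \<delta>) u0 v0 t \<xi> - sol_dt_hat (\<lambda>\<xi>. \<gamma> * norm \<xi>) u0 v0 t \<xi>))
    \<longlongrightarrow> 0) (at_right 0)"
proof (rule tendsto_SUP_zero)
  show "{0..T} \<noteq> {}"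
    using T_nonneg by simp
  let ?B = "\<lambda>\<delta>. sqrt (\<integral>\<xi>. sol_err_density s u0 v0 \<delta> \<xi> \<partial>lborel) +
    sqrt (\<integral>\<xi>. sol_dt_err_density s u0 v0 \<delta> \<xi> \<partial>lborel)"
  show "(?B \<longlongrightarrow> 0) (at_right 0)"
    using tendsto_add[OF tendsto_real_sqrt tendsto_real_sqrt, OF integral_err_densities_tendsto_0[OF assms]]
    by simp
  have "Hs_norm s (\<lambda>\<xi>. sol_hat (w \<delta>) u0 v0 t \<xi> - sol_hat (\<lambda>\<xi>. \<gamma> * norm \<xi>) u0 v0 t \<xi>) \<le>
      sqrt (\<integral>\<xi>. sol_err_density s u0 v0 \<delta> \<xi> \<partial>lborel)"
    "Hs_norm (s - 1) (\<lambda>\<xi>. sol_dt_hat (w \<delta>) u0 v0 t \<xi> - sol_dt_hat (\<lambda>\<xi>. \<gamma> * norm \<xi>) u0 v0 t \<xi>) \<le>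
      sqrt (\<integral>\<xi>. sol_dt_err_density s u0 v0 \<delta> \<xi> \<partial>lborel)"
    if "0 < \<delta>" "\<delta> \<le> 1" "t \<in> {0..T}" for \<delta> t
    using that
    by (auto intro!: Hs_norm_le_sqrt_integral[OF integrable_err_densities(1)[OF assms] err_densities_nonneg(1)
          weighted_norm_sol_hat_diff_le]
        Hs_norm_le_sqrt_integral[OF integrable_err_densities(2)[OF assms] err_densities_nonneg(2)
          weighted_norm_sol_dt_hat_diff_le])
  then show "\<forall>\<^sub>F \<delta> in at_right 0. \<forall>t\<in>{0..T}.
      0 \<le> Hs_norm s (\<lambda>\<xi>. sol_hat (w \<delta>) u0 v0 t \<xi> - sol_hat (\<lambda>\<xi>. \<gamma> * norm \<xi>) u0 v0 t \<xi>) +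
        Hs_norm (s - 1) (\<lambda>\<xi>. sol_dt_hat (w \<delta>) u0 v0 t \<xi> - sol_dt_hat (\<lambda>\<xi>. \<gamma> * norm \<xi>) u0 v0 t \<xi>) \<and>
      Hs_norm s (\<lambda>\<xi>. sol_hat (w \<delta>) u0 v0 t \<xi> - sol_hat (\<lambda>\<xi>. \<gamma> * norm \<xi>) u0 v0 t \<xi>) +
        Hs_norm (s - 1) (\<lambda>\<xi>. sol_dt_hat (w \<delta>) u0 v0 t \<xi> - sol_dt_hat (\<lambda>\<xi>. \<gamma> * norm \<xi>) u0 v0 t \<xi>) \<le> ?B \<delta>"
    unfolding eventually_at_right_field
    by (intro exI[of _ 1]) (auto simp: Hs_norm_def intro: add_mono)
qed

end

end

theorem theorem1p3:
  fixes \<kappa> \<alpha> s T :: real and chi :: "real \<Rightarrow> real"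
    and u0 v0 :: "real^'d \<Rightarrow> complex^'d"
  assumes "\<kappa> > 0" and "0 < \<alpha>" and "\<alpha> < 1"
    and "chi \<in> borel_measurable borel"
    and "\<And>x. 0 \<le> chi x" and "\<And>x. chi x \<le> 1"
    and "\<And>x. \<bar>x\<bar> > 1 \<Longrightarrow> chi x = 0"
    and "\<And>x. \<bar>x\<bar> \<le> 1/2 \<Longrightarrow> chi x = 1"
    and "in_Hs s u0" and "real_valued_hat u0"
    and "in_Hs (s - \<alpha>) v0" and "real_valued_hat v0"
    and "0 \<le> T"
  shows "((\<lambda>\<delta>. SUP t\<in>{0..T}.
            Hs_norm s (\<lambda>\<xi>. sol_hat (omega \<kappa> \<alpha> chi \<delta>) u0 v0 t \<xi>
                        - sol_hat (\<lambda>\<xi>. gamma_const TYPE('d) \<kappa> \<alpha> chi * norm \<xi>) u0 v0 t \<xi>)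
          + Hs_norm (s - 1) (\<lambda>\<xi>. sol_dt_hat (omega \<kappa> \<alpha> chi \<delta>) u0 v0 t \<xi>
                        - sol_dt_hat (\<lambda>\<xi>. gamma_const TYPE('d) \<kappa> \<alpha> chi * norm \<xi>) u0 v0 t \<xi>))
         \<longlongrightarrow> 0) (at_right 0)"
proof -
  interpret peridynamic_kernel \<kappa> \<alpha> chi
    using assms by unfold_locales auto
  obtain c where "0 < c" and c: "\<And>\<delta> (\<xi>::real^'d). 0 < \<delta> \<Longrightarrow> \<delta> \<le> 1 \<Longrightarrow> 1 \<le> norm \<xi> \<Longrightarrow>
      c * norm \<xi> powr \<alpha> \<le> omega \<kappa> \<alpha> chi \<delta> \<xi>"
    using omega_ge_powr by blast
  interpret wave_symbol_approximation "omega \<kappa> \<alpha> chi :: real \<Rightarrow> real^'d \<Rightarrow> real"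
      "gamma_const TYPE('d) \<kappa> \<alpha> chi" c \<alpha>
    using omega_nonneg omega_le_gamma c tendsto_omega \<open>0 < c\<close> assms(2,3) by unfold_locales auto
  show ?thesis
    using SUP_Hs_norm_diff_tendsto_0[OF \<open>0 \<le> T\<close> \<open>in_Hs s u0\<close> \<open>in_Hs (s - \<alpha>) v0\<close>] .
qed

end
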